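(* Let $n\in\mathbb{N}$, $\mathcal H\in C^2(\mathbb{R}^{2n})$, and consider $\dot x=J_{2n}\nabla\mathcal H(x)$ with flow $\Phi^t$. Let $K\subset\mathbb{R}^{2n}$ be nonempty, compact and forward invariant for times in $[0,T]$ with $T\in(0,\infty]$, i.e. $\Phi^t(K)\subset K$ for all $t\in[0,T]$. Let $L_K:=\sup_{y\in K}\|\nabla^2\mathcal H(y)\|_2<\infty$ and $\Delta T_K^\star:=\min\{T,\ \log 2/L_K\}$ (with $\log2/L_K:=+\infty$ if $L_K=0$). Then for every fixed $\Delta T$ with $0<\Delta T<\Delta T_K^\star$: for every $x\in K$ the lower-right block $\mathbf D(x)=\partial_p\mathbf P(x)$ of $D\Phi^{\Delta T}(x)$ is invertible; and on any $(q,P)$-chart $(U,\psi)$ with $U\cap K\ne\emptyset$ whose coordinate image $W:=\psi(U)$ is simply connected, $\mathbf D$ is invertible on $U$, $\psi$ is a diffeomorphism onto the simply connected open set $W$, and there exists a generating function $S$ on $W$ such that, with $\mathbf p,\mathbf Q$ viewed as functions of $(q,P)$ (i.e. $(q,\mathbf p(q,P))=\psi^{-1}(q,P)$, $\mathbf Q(q,P)=\mathbf Q(q,\mathbf p(q,P))$), \[ \mathbf p(q,P)=\partial_qS(q,P),\qquad \mathbf Q(q,P)=\partial_PS(q,P), \] and $S^{\Delta T}(q,P):=\frac1{\Delta T}(S(q,P)-q^\top P)$ satisfies $J_{2n}^\top\frac{\Phi^{\Delta T}(x)-x}{\Delta T}=\nabla_{(q,P)}S^{\Delta T}(I_1x+I_2\Phi^{\Delta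 T}(x))$ for all $x\in U$; these statements hold for all $x\in K$ and all $0<\Delta T<\Delta T_K^\star$.
   Context: $J_{2n}=\begin{bmatrix}0_n&I_n\\-I_n&0_n\end{bmatrix}$, $I_1=\begin{bmatrix}I_n&0\\0&0\end{bmatrix}$, $I_2=\begin{bmatrix}0&0\\0&I_n\end{bmatrix}$. Write $\Phi^{\Delta T}(q,p)=(\mathbf Q(q,p),\mathbf P(q,p))$ with $x=(q,p)\in\mathbb{R}^n\times\mathbb{R}^n$, and $D\Phi^{\Delta T}=\begin{pmatrix}\mathbf A&\mathbf B\\\mathbf C&\mathbf D\end{pmatrix}$ in $n\times n$ blocks. A $(q,P)$-chart $(U,\psi)$ is an open set $U\subset\mathbb{R}^{2n}$ on which $\Phi^{\Delta T}$ is defined, together with the map $\psi(q,p):=(q,\mathbf P(q,p))$, which is a diffeomorphism from $U$ onto the open set $\psi(U)$. *)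

theory Defs
  imports "HOL-Analysis.Analysis"
begin

text \<open>Phase space R^{2n} is modelled as R^n x R^n, points x = (q,p).\<close>

type_synonym 'n phase = "(real^'n) \<times> (real^'n)"

definition Jmat :: "('n::finite) phase \<Rightarrow> ('n::finite) phase" where
  "Jmat x = (snd x, - fst x)"

definition JmatT :: "('n::finite) phase \<Rightarrow> ('n::finite) phase" where
  "JmatT x = (- snd x, fst x)"

definition I1 :: "('n::finite) phase \<Rightarrow> ('n::finite) phase" where
  "I1 x = (fst x, 0)"

definition I2 :: "('n::finite) phase \<Rightarrow> ('n::finite) phase" where
  "I2 x = (0, snd x)"

definition has_gradient :: "('a::real_inner \<Rightarrow> real) \<Rightarrow> 'a \<Rightarrow> 'a \<Rightarrow> bool" where
  "has_gradient f g x \<longleftrightarrow> (f has_derivative (\<lambda>h. g \<bullet> h)) (at x)"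

definition ham_vf :: "(('n::finite) phase \<Rightarrow> ('n::finite) phase) \<Rightarrow> ('n::finite) phase \<Rightarrow> ('n::finite) phase" where
  "ham_vf gH x = Jmat (gH x)"

definition flow_exists :: "('a::real_normed_vector \<Rightarrow> 'a) \<Rightarrow> real \<Rightarrow> 'a \<Rightarrow> bool" where
  "flow_exists F t x \<longleftrightarrow> 0 \<le> t \<and> (\<exists>\<gamma>. \<gamma> 0 = x \<and>
      (\<forall>s\<in>{0..t}. (\<gamma> has_vector_derivative F (\<gamma> s)) (at s within {0..t})))"

definition flow :: "('a::real_normed_vector \<Rightarrow> 'a) \<Rightarrow> real \<Rightarrow> 'a \<Rightarrow> 'a" where
  "flow F t x = (THE y. \<exists>\<gamma>. \<gamma> 0 = x \<and>
      (\<forall>s\<in>{0..t}. (\<gamma> has_vector_derivative F (\<gamma> s)) (at s within {0..t})) \<and> \<gamma> t = y)"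

definition hess_bound :: "('a \<Rightarrow> 'b::real_normed_vector) \<Rightarrow> 'a set \<Rightarrow> real" where
  "hess_bound Hess K = (SUP y\<in>K. norm (Hess y))"

definition step_bound :: "ereal \<Rightarrow> real \<Rightarrow> ereal" where
  "step_bound T L = min T (if L = 0 then \<infinity> else ereal (ln 2 / L))"

definition lower_block :: "(('n::finite) phase \<Rightarrow> ('n::finite) phase) \<Rightarrow> real^'n \<Rightarrow> real^'n" where
  "lower_block A v = snd (A (0, v))"

definition lower_block_invertible_at :: "(('n::finite) phase \<Rightarrow> ('n::finite) phase) \<Rightarrow> ('n::finite) phase \<Rightarrow> bool" where
  "lower_block_invertible_at \<Phi> x \<longleftrightarrow>
     (\<exists>A. (\<Phi> has_derivative A) (at x) \<and> bij (lower_block A))"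

definition diffeo_on :: "'a::real_normed_vector set \<Rightarrow> 'b::real_normed_vector set \<Rightarrow> ('a \<Rightarrow> 'b) \<Rightarrow> bool" where
  "diffeo_on U V g \<longleftrightarrow> g ` U = V \<and> inj_on g U \<and> g differentiable_on U \<and>
      (inv_into U g) differentiable_on V"

definition qP_map :: "(('n::finite) phase \<Rightarrow> ('n::finite) phase) \<Rightarrow> ('n::finite) phase \<Rightarrow> ('n::finite) phase" where
  "qP_map \<Phi> x = (fst x, snd (\<Phi> x))"

definition qP_chart :: "(('n::finite) phase \<Rightarrow> ('n::finite) phase) \<Rightarrow> real \<Rightarrow> ('n::finite) phase set \<Rightarrow> bool" where
  "qP_chart F dt U \<longleftrightarrow> open U \<and> (\<forall>x\<in>U. flow_exists F dt x) \<and>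
      open (qP_map (flow F dt) ` U) \<and> diffeo_on U (qP_map (flow F dt) ` U) (qP_map (flow F dt))"

end

theory Submission
  imports Defs
begin

text \<open>Along a trajectory that stays in \<open>K\<close>, the derivative \<open>D\<Phi>\<^sup>s\<close> of the flow solves the
  variational equation \<open>v' = J \<nabla>\<^sup>2H(z(s)) v\<close>, whose coefficients have norm at most \<open>L\<^sub>K\<close>.
  Gronwall's inequality gives \<open>\<parallel>D\<Phi>\<^sup>\<Delta>\<^sup>T - I\<parallel> \<le> exp(L\<^sub>K \<Delta>T) - 1 < 1\<close> when \<open>\<Delta>T < log 2 / L\<^sub>K\<close>,
  so the lower-right block \<open>\<^bold>D = I + (\<^bold>D - I)\<close> is invertible.

  On a \<open>(q,P)\<close>-chart the generating function is explicit. For the action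
  \<open>A(x) = \<integral>\<^sub>0\<^sup>\<Delta>\<^sup>T (p \<cdot> \<partial>\<^sub>pH - H)(\<Phi>\<^sup>r(x)) dr\<close>, differentiation under the integral together with
  the variational equation gives \<open>dA = P dQ - p dq\<close>; hence \<open>S = P \<cdot> Q - A\<close>, read as a function
  of \<open>(q,P)\<close>, satisfies \<open>dS = p dq + Q dP\<close>.\<close>

section \<open>Gronwall's inequality and uniqueness of solutions\<close>

lemma gronwall_integral:
  fixes u :: "real \<Rightarrow> real"
  assumes t: "0 \<le> t" and L: "0 < L" and cu: "continuous_on {0..t} u"
    and le: "\<And>s. s \<in> {0..t} \<Longrightarrow> u s \<le> a + L * integral {0..s} u"
    and s: "s \<in> {0..t}"
  shows "u s \<le> a * exp (L * s)"
proof -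
  define v where "v r = integral {0..r} u" for r
  have vd: "(v has_real_derivative u r) (at r within {0..t})" if "r \<in> {0..t}" for r
    using integral_has_vector_derivative[OF cu that] unfolding v_def
    by (simp add: has_real_derivative_iff_has_vector_derivative)
  \<comment> \<open>\<open>g\<close> is non-increasing since \<open>v' = u \<le> a + L v\<close>.\<close>
  define g where "g r = exp (-L*r) * (v r + a/L)" for r
  define g' where "g' r = exp (-L*r) * (u r - L * v r - a)" for r
  have gd: "(g has_real_derivative g' r) (at r within {0..s})" if "r \<in> {0..s}" for r
  proof -
    have r: "r \<in> {0..t}" using that s by auto
    have "(v has_real_derivative u r) (at r within {0..s})"
      by (rule DERIV_subset[OF vd[OF r]]) (use s in auto)
    then have "(g has_real_derivative (-L * exp (-L*r)) * (v r + a/L) + exp (-L*r) * u r) (at r within {0..s})"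
      unfolding g_def by (auto intro!: derivative_eq_intros)
    moreover have "(-L * exp (-L*r)) * (v r + a/L) + exp (-L*r) * u r = g' r"
      using L unfolding g'_def by (simp add: field_simps)
    ultimately show ?thesis by simp
  qed
  have s0: "0 \<le> s" using s by auto
  obtain x where x: "x \<in> {0..s}" and eq: "g s - g 0 = s * g' x"
    using mvt_very_simple[OF s0, of g "\<lambda>r h. h * g' r"] gd
    by (auto simp: has_real_derivative_iff_has_vector_derivative has_vector_derivative_def mult.commute)
  have "u x \<le> a + L * v x" using le[of x] x s unfolding v_def by auto
  then have "g' x \<le> 0" unfolding g'_def by (simp add: mult_nonneg_nonpos)
  then have "g s \<le> g 0" using eq s0 mult_nonneg_nonpos[of s "g' x"] by simp
  then have "exp (- L * s) * (v s + a / L) \<le> a / L" unfolding g_def v_def by simp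
  then have "v s + a/L \<le> a/L * exp (L * s)"
    by (simp add: exp_minus field_simps)
  then have "L * (v s + a/L) \<le> L * (a/L * exp (L * s))" using L by (intro mult_left_mono) auto
  then have "a + L * v s \<le> a * exp (L * s)" using L by (simp add: distrib_left)
  with le[OF s] show ?thesis unfolding v_def by simp
qed

definition solves_on :: "(real \<Rightarrow> 'a::real_normed_vector \<Rightarrow> 'a) \<Rightarrow> real \<Rightarrow> (real \<Rightarrow> 'a) \<Rightarrow> bool" where
  "solves_on f t \<gamma> \<longleftrightarrow> (\<forall>s\<in>{0..t}. (\<gamma> has_vector_derivative f s (\<gamma> s)) (at s within {0..t}))"

lemma solves_on_continuous: "solves_on f t \<gamma> \<Longrightarrow> continuous_on {0..t} \<gamma>"
  unfolding solves_on_def continuous_on_eq_continuous_within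
  using has_vector_derivative_continuous by blast

lemma solves_on_mono: "solves_on f t \<gamma> \<Longrightarrow> s \<le> t \<Longrightarrow> solves_on f s \<gamma>"
  unfolding solves_on_def
  by (meson atLeastAtMost_iff atLeastatMost_subset_iff has_vector_derivative_within_subset order_refl order_trans)

lemma solves_on_integral:
  fixes f :: "real \<Rightarrow> 'a::banach \<Rightarrow> 'a"
  assumes "solves_on f t \<gamma>" "s \<in> {0..t}"
  shows "(\<lambda>r. f r (\<gamma> r)) integrable_on {0..s}" "\<gamma> s = \<gamma> 0 + integral {0..s} (\<lambda>r. f r (\<gamma> r))"
proof -
  have "solves_on f s \<gamma>" using solves_on_mono assms by auto
  then have "((\<lambda>r. f r (\<gamma> r)) has_integral (\<gamma> s - \<gamma> 0)) {0..s}"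
    using assms(2) by (intro fundamental_theorem_of_calculus) (auto simp: solves_on_def)
  then show "(\<lambda>r. f r (\<gamma> r)) integrable_on {0..s}" "\<gamma> s = \<gamma> 0 + integral {0..s} (\<lambda>r. f r (\<gamma> r))"
    by (auto simp: integral_unique has_integral_integrable)
qed

lemma solves_on_dist_le_exp:
  fixes f :: "real \<Rightarrow> 'a::euclidean_space \<Rightarrow> 'a"
  assumes s1: "solves_on f t \<gamma>1" and s2: "solves_on f t \<gamma>2" and L: "0 < L"
    and lip: "\<And>s. s \<in> {0..t} \<Longrightarrow> norm (f s (\<gamma>1 s) - f s (\<gamma>2 s)) \<le> L * norm (\<gamma>1 s - \<gamma>2 s)"
    and s: "s \<in> {0..t}"
  shows "norm (\<gamma>1 s - \<gamma>2 s) \<le> norm (\<gamma>1 0 - \<gamma>2 0) * exp (L * s)"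
proof -
  define u where "u r = norm (\<gamma>1 r - \<gamma>2 r)" for r
  have t: "0 \<le> t" using s by auto
  have cu: "continuous_on {0..t} u" unfolding u_def
    using solves_on_continuous[OF s1] solves_on_continuous[OF s2] by (intro continuous_intros)
  have "u r \<le> norm (\<gamma>1 0 - \<gamma>2 0) + L * integral {0..r} u" if r: "r \<in> {0..t}" for r
  proof -
    note i1 = solves_on_integral[OF s1 r] and i2 = solves_on_integral[OF s2 r]
    have sub: "{0..r} \<subseteq> {0..t}" using r by auto
    have "\<gamma>1 r - \<gamma>2 r = (\<gamma>1 0 - \<gamma>2 0) + integral {0..r} (\<lambda>r. f r (\<gamma>1 r) - f r (\<gamma>2 r))"
      using i1 i2 by (simp add: integral_diff)
    then have "u r \<le> norm (\<gamma>1 0 - \<gamma>2 0) + norm (integral {0..r} (\<lambda>r. f r (\<gamma>1 r) - f r (\<gamma>2 r)))"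
      unfolding u_def by (metis norm_triangle_ineq)
    also have "norm (integral {0..r} (\<lambda>r. f r (\<gamma>1 r) - f r (\<gamma>2 r))) \<le> integral {0..r} (\<lambda>r. L * u r)"
    proof (rule integral_norm_bound_integral)
      show "(\<lambda>r. f r (\<gamma>1 r) - f r (\<gamma>2 r)) integrable_on {0..r}" using i1(1) i2(1) by (rule integrable_diff)
      show "(\<lambda>r. L * u r) integrable_on {0..r}"
        using continuous_on_subset[OF cu sub] by (intro integrable_continuous_real continuous_on_mult_left)
    qed (use lip sub in \<open>auto simp: u_def\<close>)
    finally show ?thesis by simp
  qed
  from gronwall_integral[OF t L cu this s] show ?thesis unfolding u_def .
qed

lemma solves_on_unique:
  fixes f :: "real \<Rightarrow> 'a::euclidean_space \<Rightarrow> 'a"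
  assumes "solves_on f t \<gamma>1" "solves_on f t \<gamma>2" "0 < L"
    and "\<And>s. s \<in> {0..t} \<Longrightarrow> norm (f s (\<gamma>1 s) - f s (\<gamma>2 s)) \<le> L * norm (\<gamma>1 s - \<gamma>2 s)"
    and "\<gamma>1 0 = \<gamma>2 0" "s \<in> {0..t}"
  shows "\<gamma>1 s = \<gamma>2 s"
  using solves_on_dist_le_exp[OF assms(1-4,6)] assms(5) by simp

section \<open>Existence of solutions by Picard iteration\<close>

lemma has_integral_power_0:
  assumes "0 \<le> s"
  shows "((\<lambda>r::real. r^k) has_integral (s^Suc k / Suc k)) {0..s}"
proof -
  have "((\<lambda>r::real. r^Suc k / Suc k) has_real_derivative r^k) (at r within {0..s})" for r
    by (auto intro!: derivative_eq_intros simp del: of_nat_Suc) (cases k, auto simp: field_simps)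
  then have "((\<lambda>r::real. r^k) has_integral ((\<lambda>r. r^Suc k / Suc k) s - (\<lambda>r. r^Suc k / Suc k) 0)) {0..s}"
    using assms by (intro fundamental_theorem_of_calculus)
      (auto simp: has_real_derivative_iff_has_vector_derivative[symmetric])
  then show ?thesis by simp
qed

lemma exp_partial_sum_le:
  assumes "0 \<le> (y::real)"
  shows "(\<Sum>j<k. y^j / fact j) \<le> exp y"
proof -
  have "(\<lambda>n. y^n / fact n) sums exp y"
    using exp_converges[of y] by (simp add: divide_inverse_commute scaleR_conv_of_real)
  then show ?thesis
    using assms sum_le_suminf[OF sums_summable] sums_unique by fastforce
qed

lemma continuous_on_compose_time:
  fixes f :: "real \<Rightarrow> 'a::topological_space \<Rightarrow> 'b::topological_space"
  assumes cf: "continuous_on ({0..t} \<times> UNIV) (\<lambda>(s,y). f s y)" and cg: "continuous_on {0..t} g"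
  shows "continuous_on {0..t} (\<lambda>r. f r (g r))"
proof -
  have "continuous_on {0..t} ((\<lambda>(s,y). f s y) \<circ> (\<lambda>r. (r, g r)))"
    by (intro continuous_on_compose continuous_intros cg continuous_on_subset[OF cf]) auto
  then show ?thesis by (simp add: o_def)
qed

primrec picard_iter :: "(real \<Rightarrow> 'a::banach \<Rightarrow> 'a) \<Rightarrow> 'a \<Rightarrow> (real \<Rightarrow> 'a) \<Rightarrow> nat \<Rightarrow> real \<Rightarrow> 'a" where
  "picard_iter f x w 0 = w"
| "picard_iter f x w (Suc k) = (\<lambda>s. x + integral {0..s} (\<lambda>r. f r (picard_iter f x w k r)))"

text \<open>Picard iteration started at an approximate solution \<open>w\<close> with defect \<open>d\<close> stays in the
  tube of radius \<open>d e\<^sup>L\<^sup>t\<close> around \<open>w\<close>, so \<open>f\<close> need only be Lipschitz on a tube of radius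
  \<open>R \<ge> d e\<^sup>L\<^sup>t\<close>.\<close>

locale picard_tube =
  fixes f :: "real \<Rightarrow> 'a::euclidean_space \<Rightarrow> 'a" and x :: 'a and w :: "real \<Rightarrow> 'a"
    and t L R d :: real
  assumes t_nonneg: "0 \<le> t" and L_pos: "0 < L"
    and w_cont: "continuous_on {0..t} w"
    and f_cont: "continuous_on ({0..t} \<times> UNIV) (\<lambda>(s,y). f s y)"
    and f_lipschitz: "\<And>s y1 y2. s \<in> {0..t} \<Longrightarrow> norm (y1 - w s) \<le> R \<Longrightarrow> norm (y2 - w s) \<le> R \<Longrightarrow>
               norm (f s y1 - f s y2) \<le> L * norm (y1 - y2)"
    and w_defect: "\<And>s. s \<in> {0..t} \<Longrightarrow> norm (x + integral {0..s} (\<lambda>r. f r (w r)) - w s) \<le> d"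
    and tube_radius: "d * exp (L * t) \<le> R"
begin

abbreviation "g \<equiv> picard_iter f x w"

lemma defect_nonneg: "0 \<le> d"
  using w_defect[of 0] t_nonneg by (meson atLeastAtMost_iff norm_ge_zero order.trans order_refl)

lemma in_tube:
  assumes "s \<in> {0..t}" "norm (y - w s) \<le> d * (\<Sum>j<k. (L * s)^j / fact j)"
  shows "norm (y - w s) \<le> R"
proof -
  have "(\<Sum>j<k. (L * s)^j / fact j) \<le> exp (L * s)" using exp_partial_sum_le[of "L * s" k] L_pos assms(1) by auto
  also have "\<dots> \<le> exp (L * t)" using L_pos assms(1) by auto
  finally show ?thesis using assms(2) defect_nonneg tube_radius by (meson mult_left_mono order_trans)
qed

lemma continuous_on_f_comp: "continuous_on {0..t} \<gamma> \<Longrightarrow> continuous_on {0..t} (\<lambda>r. f r (\<gamma> r))"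
  using continuous_on_compose_time[OF f_cont] .

lemma picard_iter_step_le:
  assumes "s \<in> {0..t}" "\<forall>r\<in>{0..t}. norm (g (Suc k) r - g k r) \<le> d * (L * r)^k / fact k"
    and "\<forall>r\<in>{0..t}. norm (g (Suc k) r - w r) \<le> R" "\<forall>r\<in>{0..t}. norm (g k r - w r) \<le> R"
    and "continuous_on {0..t} (g k)" "continuous_on {0..t} (g (Suc k))"
  shows "norm (g (Suc (Suc k)) s - g (Suc k) s) \<le> d * (L * s)^Suc k / fact (Suc k)"
proof -
  have sub: "{0..s} \<subseteq> {0..t}" using assms(1) by auto
  have i0: "(\<lambda>r. f r (g k r)) integrable_on {0..s}" and i1: "(\<lambda>r. f r (g (Suc k) r)) integrable_on {0..s}"
    using assms(5,6) sub by (auto intro!: integrable_continuous_real continuous_on_f_comp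
        intro: continuous_on_subset)
  have "g (Suc (Suc k)) s - g (Suc k) s = integral {0..s} (\<lambda>r. f r (g (Suc k) r) - f r (g k r))"
    using integral_diff[OF i1 i0] by simp
  also have "norm \<dots> \<le> integral {0..s} (\<lambda>r. (L * d * L^k / fact k) * r^k)"
  proof (rule integral_norm_bound_integral)
    show "(\<lambda>r. f r (g (Suc k) r) - f r (g k r)) integrable_on {0..s}" using i1 i0 by (rule integrable_diff)
    show "(\<lambda>r. (L * d * L^k / fact k) * r^k) integrable_on {0..s}"
      by (intro integrable_continuous_real continuous_intros)
    fix r assume r: "r \<in> {0..s}"
    then have rt: "r \<in> {0..t}" using sub by auto
    have "norm (f r (g (Suc k) r) - f r (g k r)) \<le> L * norm (g (Suc k) r - g k r)"
      using f_lipschitz[OF rt] assms(3,4) rt by blast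
    also have "\<dots> \<le> L * (d * (L * r)^k / fact k)" using assms(2) rt L_pos by (intro mult_left_mono) auto
    finally show "norm (f r (g (Suc k) r) - f r (g k r)) \<le> (L * d * L^k / fact k) * r^k"
      by (simp add: power_mult_distrib)
  qed
  also have "\<dots> = (L * d * L^k / fact k) * (s^Suc k / Suc k)"
    using has_integral_power_0[of s k] assms(1) by (auto dest: integral_unique)
  also have "\<dots> = d * (L * s)^Suc k / fact (Suc k)"
    by (simp add: power_mult_distrib field_simps del: of_nat_Suc)
  finally show ?thesis .
qed

lemma picard_iter_bounds:
  "continuous_on {0..t} (g k) \<and> (\<forall>s\<in>{0..t}. norm (g k s - w s) \<le> d * (\<Sum>j<k. (L * s)^j / fact j))
     \<and> (\<forall>s\<in>{0..t}. norm (g (Suc k) s - g k s) \<le> d * (L * s)^k / fact k)"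
proof (induction k)
  case 0
  then show ?case using w_cont w_defect by simp
next
  case (Suc k)
  have cont: "continuous_on {0..t} (g (Suc k))"
    using Suc continuous_on_f_comp
    by (auto intro!: continuous_intros indefinite_integral_continuous_1 integrable_continuous_real)
  have near: "\<forall>s\<in>{0..t}. norm (g (Suc k) s - w s) \<le> d * (\<Sum>j<Suc k. (L * s)^j / fact j)"
  proof
    fix s assume s: "s \<in> {0..t}"
    have "norm (g (Suc k) s - w s) \<le> norm (g (Suc k) s - g k s) + norm (g k s - w s)"
      by (metis diff_add_cancel norm_triangle_ineq add_diff_eq)
    also have "\<dots> \<le> d * (L * s)^k / fact k + d * (\<Sum>j<k. (L * s)^j / fact j)"
      using Suc s by (intro add_mono) auto
    finally show "norm (g (Suc k) s - w s) \<le> d * (\<Sum>j<Suc k. (L * s)^j / fact j)"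
      by (simp add: algebra_simps)
  qed
  have "\<forall>r\<in>{0..t}. norm (g (Suc k) r - w r) \<le> R" "\<forall>r\<in>{0..t}. norm (g k r - w r) \<le> R"
    using in_tube near Suc by blast+
  then have "\<forall>s\<in>{0..t}. norm (g (Suc (Suc k)) s - g (Suc k) s) \<le> d * (L * s)^Suc k / fact (Suc k)"
    using Suc cont by (intro ballI picard_iter_step_le) auto
  then show ?case using cont near by blast
qed

definition limit :: "real \<Rightarrow> 'a" where
  "limit s = w s + (\<Sum>i. g (Suc i) s - g i s)"

lemma picard_iter_uniform_limit: "uniform_limit {0..t} g limit sequentially"
proof -
  define M where "M i = d * (L * t)^i / fact i" for i
  have "M sums (d * exp (L * t))"
    unfolding M_def using sums_mult[OF exp_converges[of "L * t"], of d]
    by (simp add: divide_inverse_commute scaleR_conv_of_real mult_ac)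
  moreover have "norm (g (Suc i) s - g i s) \<le> M i" if "s \<in> {0..t}" for i s
  proof -
    have "(L * s)^i \<le> (L * t)^i" using that L_pos by (intro power_mono) auto
    then have "d * (L * s)^i / fact i \<le> M i" unfolding M_def using defect_nonneg
      by (intro divide_right_mono mult_left_mono) auto
    then show ?thesis using picard_iter_bounds[of i] that by force
  qed
  ultimately have "uniform_limit {0..t} (\<lambda>n s. w s + (\<Sum>i<n. g (Suc i) s - g i s)) limit sequentially"
    unfolding limit_def by (intro uniform_limit_add Weierstrass_m_test uniform_limit_const) (auto dest: sums_summable)
  moreover have "w s + (\<Sum>i<n. g (Suc i) s - g i s) = g n s" for n s
    by (subst sum_lessThan_telescope[where f = "\<lambda>i. g i s"]) simp
  ultimately show ?thesis by simp
qed

lemma limit_continuous: "continuous_on {0..t} limit"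
  using picard_iter_bounds by (intro uniform_limit_theorem[OF _ picard_iter_uniform_limit]) auto

lemma limit_near: "s \<in> {0..t} \<Longrightarrow> norm (limit s - w s) \<le> d * exp (L * t)"
proof -
  assume s: "s \<in> {0..t}"
  have "\<forall>n. norm (g n s - w s) \<le> d * exp (L * t)"
  proof
    fix n
    have "(\<Sum>j<n. (L * s)^j / fact j) \<le> exp (L * s)" using exp_partial_sum_le[of "L * s" n] L_pos s by auto
    also have "\<dots> \<le> exp (L * t)" using L_pos s by auto
    finally show "norm (g n s - w s) \<le> d * exp (L * t)"
      using picard_iter_bounds[of n] s defect_nonneg by (meson mult_left_mono order_trans)
  qed
  moreover have "(\<lambda>n. g n s - w s) \<longlonglongrightarrow> limit s - w s"
    using tendsto_uniform_limitI[OF picard_iter_uniform_limit s] by (intro tendsto_intros)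
  ultimately show ?thesis by (intro tendsto_le[OF _ tendsto_const tendsto_norm]) auto
qed

lemma limit_fixed_point:
  assumes s: "s \<in> {0..t}"
  shows "limit s = x + integral {0..s} (\<lambda>r. f r (limit r))"
proof -
  have sub: "{0..s} \<subseteq> {0..t}" using s by auto
  have ul: "uniform_limit {0..s} (\<lambda>n r. f r (g n r)) (\<lambda>r. f r (limit r)) sequentially"
  proof (rule uniform_limitI)
    fix e :: real assume e: "0 < e"
    have "\<forall>\<^sub>F n in sequentially. \<forall>r\<in>{0..t}. dist (g n r) (limit r) < e / L"
      using uniform_limitD[OF picard_iter_uniform_limit] e L_pos by auto
    then show "\<forall>\<^sub>F n in sequentially. \<forall>r\<in>{0..s}. dist (f r (g n r)) (f r (limit r)) < e"
    proof eventually_elim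
      case (elim n)
      show ?case
      proof
        fix r assume r: "r \<in> {0..s}"
        then have rt: "r \<in> {0..t}" using sub by auto
        have "norm (g n r - w r) \<le> R" using in_tube[OF rt] picard_iter_bounds rt by blast
        moreover have "norm (limit r - w r) \<le> R" using limit_near[OF rt] tube_radius by linarith
        ultimately have "norm (f r (g n r) - f r (limit r)) \<le> L * norm (g n r - limit r)"
          using f_lipschitz[OF rt] by blast
        also have "\<dots> < e" using elim rt L_pos by (simp add: dist_norm field_simps)
        finally show "dist (f r (g n r)) (f r (limit r)) < e" by (simp add: dist_norm)
      qed
    qed
  qed
  have cont: "continuous_on {0..s} (\<lambda>r. f r (g n r))" for n
    using continuous_on_f_comp picard_iter_bounds continuous_on_subset sub by blast
  obtain I J where I: "\<And>n. ((\<lambda>r. f r (g n r)) has_integral I n) {0..s}"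
    and J: "((\<lambda>r. f r (limit r)) has_integral J) {0..s}" and IJ: "I \<longlonglongrightarrow> J"
    using uniform_limit_integral[OF ul cont] by auto
  have "(\<lambda>n. g (Suc n) s) = (\<lambda>n. x + I n)"
    using I by (auto simp: integral_unique)
  then have "(\<lambda>n. g (Suc n) s) \<longlonglongrightarrow> x + J" using IJ by (auto intro: tendsto_intros)
  moreover have "(\<lambda>n. g (Suc n) s) \<longlonglongrightarrow> limit s"
    using tendsto_uniform_limitI[OF picard_iter_uniform_limit s] by (rule LIMSEQ_Suc)
  ultimately show ?thesis using J LIMSEQ_unique integral_unique by metis
qed

lemma solution_exists:
  "\<exists>\<gamma>. solves_on f t \<gamma> \<and> \<gamma> 0 = x \<and> (\<forall>s\<in>{0..t}. norm (\<gamma> s - w s) \<le> d * exp (L * t))"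
proof (intro exI conjI)
  show "solves_on f t limit"
    unfolding solves_on_def
  proof
    fix s assume s: "s \<in> {0..t}"
    have "((\<lambda>s. x + integral {0..s} (\<lambda>r. f r (limit r))) has_vector_derivative f s (limit s)) (at s within {0..t})"
      using integral_has_vector_derivative[OF continuous_on_f_comp[OF limit_continuous] s]
      by (auto intro!: derivative_eq_intros)
    then show "(limit has_vector_derivative f s (limit s)) (at s within {0..t})"
      by (rule has_vector_derivative_transform[OF s, rotated]) (use limit_fixed_point in auto)
  qed
  show "limit 0 = x" using limit_fixed_point[of 0] t_nonneg by simp
qed (use limit_near in auto)

end

section \<open>Differentiability of the flow in the initial value\<close>

lemma linear_solution_near_initial:
  fixes A :: "real \<Rightarrow> 'a::euclidean_space \<Rightarrow>\<^sub>L 'a"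
  assumes v: "solves_on (\<lambda>s v. A s v) t v" and B: "0 < B" "\<forall>s\<in>{0..t}. norm (A s) \<le> B"
    and s: "s \<in> {0..t}"
  shows "norm (v s - v 0) \<le> (exp (B * s) - 1) * norm (v 0)"
proof -
  have zero: "solves_on (\<lambda>s v. A s v) t (\<lambda>_. 0)" unfolding solves_on_def by (auto simp: blinfun.zero_right)
  have growth: "norm (v r) \<le> norm (v 0) * exp (B * r)" if r: "r \<in> {0..t}" for r
  proof -
    have "norm (v r - 0) \<le> norm (v 0 - 0) * exp (B * r)"
    proof (rule solves_on_dist_le_exp[OF v zero B(1) _ r])
      fix q assume q: "q \<in> {0..t}"
      have "norm (A q (v q) - A q 0) \<le> norm (A q) * norm (v q - 0)" by (simp add: norm_blinfun blinfun.zero_right)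
      also have "\<dots> \<le> B * norm (v q - 0)" using B q by (intro mult_right_mono) auto
      finally show "norm (A q (v q) - A q 0) \<le> B * norm (v q - 0)" .
    qed
    then show ?thesis by simp
  qed
  have sub: "{0..s} \<subseteq> {0..t}" using s by auto
  note v_int = solves_on_integral[OF v s]
  have exp_int: "((\<lambda>r. B * norm (v 0) * exp (B * r)) has_integral
      ((\<lambda>r. norm (v 0) * exp (B * r)) s - (\<lambda>r. norm (v 0) * exp (B * r)) 0)) {0..s}"
    apply (rule fundamental_theorem_of_calculus)
    using s apply simp
    unfolding has_real_derivative_iff_has_vector_derivative[symmetric]
    by (auto intro!: derivative_eq_intros)
  have "norm (v s - v 0) = norm (integral {0..s} (\<lambda>r. A r (v r)))" using v_int(2) by simp
  also have "\<dots> \<le> integral {0..s} (\<lambda>r. B * norm (v 0) * exp (B * r))"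
  proof (rule integral_norm_bound_integral[OF v_int(1)])
    show "(\<lambda>r. B * norm (v 0) * exp (B * r)) integrable_on {0..s}" using exp_int by blast
    fix q assume q: "q \<in> {0..s}"
    then have qt: "q \<in> {0..t}" using sub by auto
    have "norm (A q (v q)) \<le> norm (A q) * norm (v q)" by (rule norm_blinfun)
    also have "\<dots> \<le> B * (norm (v 0) * exp (B * q))"
      using B qt growth[OF qt] by (intro mult_mono) auto
    finally show "norm (A q (v q)) \<le> B * norm (v 0) * exp (B * q)" by (simp add: mult.assoc)
  qed
  also have "\<dots> = (exp (B * s) - 1) * norm (v 0)" using integral_unique[OF exp_int] by (simp add: algebra_simps)
  finally show ?thesis .
qed

lemma lipschitz_on_cball:
  fixes f :: "'a::euclidean_space \<Rightarrow> 'b::real_normed_vector"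
  assumes f_deriv: "\<And>x. (f has_derivative blinfun_apply (Df x)) (at x)" and Df_cont: "continuous_on UNIV Df"
  shows "\<exists>L>0. \<forall>x\<in>cball c R. \<forall>y\<in>cball c R. norm (f x - f y) \<le> L * norm (x - y)"
proof -
  have "compact (Df ` cball c R)"
    by (rule compact_continuous_image) (use Df_cont continuous_on_subset in auto)
  then obtain B where B: "B > 0" "\<forall>x\<in>cball c R. norm (Df x) \<le> B"
    using compact_imp_bounded bounded_pos by (metis image_eqI)
  have "norm (f x - f y) \<le> B * norm (x - y)" if "x \<in> cball c R" "y \<in> cball c R" for x y
    apply (rule differentiable_bound[of "cball c R" f "\<lambda>x. blinfun_apply (Df x)"])
    using that B f_deriv by (auto simp: norm_blinfun.rep_eq[symmetric] intro: has_derivative_at_withinI)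
  then show ?thesis using B by blast
qed

lemma uniformly_differentiable_on_compact:
  fixes f :: "'a::euclidean_space \<Rightarrow> 'b::real_normed_vector"
  assumes f_deriv: "\<And>x. (f has_derivative blinfun_apply (Df x)) (at x)" and Df_cont: "continuous_on UNIV Df"
    and C: "compact C" and e: "0 < e"
  shows "\<exists>\<rho>>0. \<forall>c\<in>C. \<forall>y. norm (y - c) \<le> \<rho> \<longrightarrow> norm (f y - f c - Df c (y - c)) \<le> e * norm (y - c)"
proof -
  obtain Rc where Rc: "\<forall>x\<in>C. norm x \<le> Rc" using compact_imp_bounded[OF C] bounded_pos by blast
  define K where "K = cball (0::'a) (Rc + 1)"
  have "uniformly_continuous_on K Df"
    by (rule compact_uniformly_continuous) (use Df_cont continuous_on_subset K_def in auto)
  then obtain d where d: "d > 0" "\<forall>x\<in>K. \<forall>x'\<in>K. dist x' x < d \<longrightarrow> dist (Df x') (Df x) < e"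
    unfolding uniformly_continuous_on_def using e by blast
  define \<rho> where "\<rho> = min (d/2) 1"
  have \<rho>: "\<rho> > 0" using d by (simp add: \<rho>_def)
  have "norm (f y - f c - Df c (y - c)) \<le> e * norm (y - c)" if c: "c \<in> C" and y: "norm (y - c) \<le> \<rho>" for c y
  proof -
    have sub: "cball c \<rho> \<subseteq> K"
    proof
      fix u assume "u \<in> cball c \<rho>"
      then have "norm (u - c) \<le> 1" unfolding \<rho>_def by (auto simp: dist_norm norm_minus_commute)
      moreover have "norm c \<le> Rc" using Rc c by auto
      ultimately have "norm u \<le> Rc + 1" by (metis add.commute diff_add_cancel norm_triangle_le add_mono)
      then show "u \<in> K" by (simp add: K_def)
    qed
    have "norm ((\<lambda>u. f u - Df c u) y - (\<lambda>u. f u - Df c u) c) \<le> e * norm (y - c)"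
    proof (rule differentiable_bound[of "cball c \<rho>" _ "\<lambda>u. blinfun_apply (Df u - Df c)"])
      show "convex (cball c \<rho>)" by simp
      fix u assume u: "u \<in> cball c \<rho>"
      show "((\<lambda>u. f u - Df c u) has_derivative blinfun_apply (Df u - Df c)) (at u within cball c \<rho>)"
        by (auto intro!: derivative_eq_intros has_derivative_at_withinI[OF f_deriv] simp: blinfun.diff_left)
      have "u \<in> K" "c \<in> K" using u sub \<rho> by auto
      moreover have "dist u c < d" using u d unfolding \<rho>_def by (auto simp: dist_commute)
      ultimately have "dist (Df u) (Df c) < e" using d by blast
      then show "onorm (blinfun_apply (Df u - Df c)) \<le> e"
        by (simp add: norm_blinfun.rep_eq[symmetric] dist_norm)
    qed (use y \<rho> in \<open>auto simp: dist_norm norm_minus_commute\<close>)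
    then show ?thesis by (simp add: blinfun.diff_right algebra_simps)
  qed
  then show ?thesis using \<rho> by blast
qed

lemma continuous_on_bounded_on_interval:
  fixes f :: "real \<Rightarrow> 'b::real_normed_vector"
  assumes "continuous_on {0..t} f"
  shows "\<exists>B>0. \<forall>s\<in>{0..t}. norm (f s) \<le> B"
proof -
  have "compact (f ` {0..t})" using compact_continuous_image[OF assms] by auto
  then show ?thesis using compact_imp_bounded bounded_pos by (metis image_eqI)
qed

locale c1_vector_field =
  fixes F :: "'a::euclidean_space \<Rightarrow> 'a" and DF :: "'a \<Rightarrow> 'a \<Rightarrow>\<^sub>L 'a"
  assumes F_has_derivative: "\<And>x. (F has_derivative blinfun_apply (DF x)) (at x)"
    and DF_continuous: "continuous_on UNIV DF"
begin

lemma F_continuous: "continuous_on UNIV F"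
  using F_has_derivative has_derivative_continuous continuous_at_imp_continuous_on by blast

lemma solution_unique:
  assumes s1: "solves_on (\<lambda>_. F) t \<gamma>1" and s2: "solves_on (\<lambda>_. F) t \<gamma>2"
    and "\<gamma>1 0 = \<gamma>2 0" and "s \<in> {0..t}"
  shows "\<gamma>1 s = \<gamma>2 s"
proof -
  obtain R1 where R1: "\<forall>s\<in>{0..t}. norm (\<gamma>1 s) \<le> R1"
    using continuous_on_bounded_on_interval[OF solves_on_continuous[OF s1]] by blast
  obtain R2 where R2: "\<forall>s\<in>{0..t}. norm (\<gamma>2 s) \<le> R2"
    using continuous_on_bounded_on_interval[OF solves_on_continuous[OF s2]] by blast
  obtain L where L: "L > 0" "\<forall>x\<in>cball 0 (max R1 R2). \<forall>y\<in>cball 0 (max R1 R2). norm (F x - F y) \<le> L * norm (x - y)"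
    using lipschitz_on_cball[OF F_has_derivative DF_continuous] by blast
  show ?thesis
  proof (rule solves_on_unique[OF s1 s2 L(1) _ assms(3,4)])
    fix r assume r: "r \<in> {0..t}"
    have "norm (\<gamma>1 r) \<le> R1" "norm (\<gamma>2 r) \<le> R2" using R1 R2 r by auto
    then have "\<gamma>1 r \<in> cball 0 (max R1 R2)" "\<gamma>2 r \<in> cball 0 (max R1 R2)" by auto
    then show "norm (F (\<gamma>1 r) - F (\<gamma>2 r)) \<le> L * norm (\<gamma>1 r - \<gamma>2 r)" using L(2) by auto
  qed
qed

lemma flow_eq_solution:
  assumes sol: "solves_on (\<lambda>_. F) t \<gamma>" and s: "s \<in> {0..t}"
  shows "flow F s (\<gamma> 0) = \<gamma> s" "flow_exists F s (\<gamma> 0)"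
proof -
  have sol_s: "solves_on (\<lambda>_. F) s \<gamma>" using solves_on_mono[OF sol] s by auto
  show "flow F s (\<gamma> 0) = \<gamma> s"
    unfolding flow_def
  proof (rule the_equality)
    show "\<exists>\<gamma>'. \<gamma>' 0 = \<gamma> 0 \<and> (\<forall>r\<in>{0..s}. (\<gamma>' has_vector_derivative F (\<gamma>' r)) (at r within {0..s})) \<and> \<gamma>' s = \<gamma> s"
      using sol_s unfolding solves_on_def by blast
    fix y assume "\<exists>\<gamma>'. \<gamma>' 0 = \<gamma> 0 \<and> (\<forall>r\<in>{0..s}. (\<gamma>' has_vector_derivative F (\<gamma>' r)) (at r within {0..s})) \<and> \<gamma>' s = y"
    then obtain \<gamma>' where "\<gamma>' 0 = \<gamma> 0" "solves_on (\<lambda>_. F) s \<gamma>'" "\<gamma>' s = y" unfolding solves_on_def by auto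
    then show "y = \<gamma> s" using solution_unique[of s \<gamma>' \<gamma> s] sol_s s by simp
  qed
  show "flow_exists F s (\<gamma> 0)" unfolding flow_exists_def using sol_s s unfolding solves_on_def by auto
qed

lemma flow_exists_solution:
  assumes "flow_exists F t x"
  obtains \<gamma> where "solves_on (\<lambda>_. F) t \<gamma>" "\<gamma> 0 = x" "\<forall>s\<in>{0..t}. flow F s x = \<gamma> s"
proof -
  obtain \<gamma> where sol: "solves_on (\<lambda>_. F) t \<gamma>" and init: "\<gamma> 0 = x"
    using assms unfolding flow_exists_def solves_on_def by auto
  show ?thesis using that[OF sol init] flow_eq_solution(1)[OF sol] init by simp
qed

lemma flow_continuous:
  assumes "flow_exists F t x" shows "continuous_on {0..t} (\<lambda>r. flow F r x)"
proof -
  obtain \<gamma> where "solves_on (\<lambda>_. F) t \<gamma>" "\<forall>s\<in>{0..t}. flow F s x = \<gamma> s"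
    using flow_exists_solution[OF assms] by blast
  then show ?thesis using solves_on_continuous continuous_on_cong by (metis (no_types, lifting))
qed

end

locale c1_trajectory = c1_vector_field +
  fixes z :: "real \<Rightarrow> 'a::euclidean_space" and t :: real
  assumes z_solves: "solves_on (\<lambda>_. F) t z" and t_nonneg: "0 \<le> t"
begin

lemma z_continuous: "continuous_on {0..t} z"
  using solves_on_continuous[OF z_solves] .

lemma flow_z: "s \<in> {0..t} \<Longrightarrow> flow F s (z 0) = z s"
  using flow_eq_solution(1)[OF z_solves] .

lemma flow_near_trajectory:
  "\<exists>\<delta>>0. \<exists>C>0. \<forall>x. norm (x - z 0) < \<delta> \<longrightarrow> flow_exists F t x \<and>
      (\<forall>s\<in>{0..t}. norm (flow F s x - z s) \<le> C * norm (x - z 0))"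
proof -
  obtain R0 where R0: "\<forall>s\<in>{0..t}. norm (z s) \<le> R0"
    using continuous_on_bounded_on_interval[OF z_continuous] by blast
  obtain L where L: "L > 0" "\<forall>x\<in>cball 0 (R0+1). \<forall>y\<in>cball 0 (R0+1). norm (F x - F y) \<le> L * norm (x - y)"
    using lipschitz_on_cball[OF F_has_derivative DF_continuous] by blast
  have F_cont: "continuous_on ({0..t} \<times> UNIV) (\<lambda>(s::real, y). F y)"
  proof -
    have "continuous_on ({0..t} \<times> UNIV) (F \<circ> snd)"
      by (intro continuous_on_compose continuous_intros continuous_on_subset[OF F_continuous]) auto
    then show ?thesis by (simp add: o_def case_prod_beta')
  qed
  have "flow_exists F t x \<and> (\<forall>s\<in>{0..t}. norm (flow F s x - z s) \<le> exp (L * t) * norm (x - z 0))"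
    if x: "norm (x - z 0) < exp (- (L * t))" for x
  proof -
    have "\<exists>y. solves_on (\<lambda>_. F) t y \<and> y 0 = x \<and>
        (\<forall>s\<in>{0..t}. norm (y s - z s) \<le> norm (x - z 0) * exp (L * t))"
    proof (rule picard_tube.solution_exists[OF picard_tube.intro[OF t_nonneg L(1) z_continuous F_cont]])
      fix s y1 y2 assume s: "s \<in> {0..t}" and y: "norm (y1 - z s) \<le> 1" "norm (y2 - z s) \<le> 1"
      have "norm (z s) \<le> R0" using R0 s by auto
      then have "norm y1 \<le> R0 + 1" "norm y2 \<le> R0 + 1"
        using y norm_triangle_sub[of y1 "z s"] norm_triangle_sub[of y2 "z s"] by auto
      then show "norm (F y1 - F y2) \<le> L * norm (y1 - y2)" using L(2) by auto
    next
      fix s assume s: "s \<in> {0..t}"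
      then show "norm (x + integral {0..s} (\<lambda>r. F (z r)) - z s) \<le> norm (x - z 0)"
        using solves_on_integral(2)[OF z_solves s] by (simp add: algebra_simps)
    next
      have "norm (x - z 0) * exp (L * t) \<le> exp (- (L * t)) * exp (L * t)"
        using x by (intro mult_right_mono) auto
      then show "norm (x - z 0) * exp (L * t) \<le> 1" by (simp add: exp_minus)
    qed
    then obtain y where y: "solves_on (\<lambda>_. F) t y" "y 0 = x"
      and close: "\<forall>s\<in>{0..t}. norm (y s - z s) \<le> norm (x - z 0) * exp (L * t)" by blast
    show ?thesis
      using flow_eq_solution[OF y(1)] y(2) close t_nonneg by (auto simp: mult.commute)
  qed
  then show ?thesis
    by (intro exI[of _ "exp (- (L * t))"] exI[of _ "exp (L * t)"] conjI exp_gt_zero allI impI) auto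
qed

lemma DFz_bounded: "\<exists>B>0. \<forall>s\<in>{0..t}. norm (DF (z s)) \<le> B"
  using continuous_on_bounded_on_interval continuous_on_compose2[OF DF_continuous z_continuous] by blast

lemma linear_ode_lipschitz:
  assumes "\<forall>s\<in>{0..t}. norm (DF (z s)) \<le> B" "s \<in> {0..t}"
  shows "norm (DF (z s) y1 - DF (z s) y2) \<le> B * norm (y1 - y2)"
proof -
  have "norm (DF (z s) y1 - DF (z s) y2) \<le> norm (DF (z s)) * norm (y1 - y2)"
    by (metis blinfun.diff_right norm_blinfun)
  also have "\<dots> \<le> B * norm (y1 - y2)" using assms by (intro mult_right_mono) auto
  finally show ?thesis .
qed

lemma variational_solution_exists: "\<exists>v. solves_on (\<lambda>s v. DF (z s) v) t v \<and> v 0 = h"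
proof -
  obtain B where B: "B > 0" "\<forall>s\<in>{0..t}. norm (DF (z s)) \<le> B" using DFz_bounded by blast
  have cont: "continuous_on ({0..t} \<times> UNIV) (\<lambda>(s, v). blinfun_apply (DF (z s)) v)"
  proof -
    have "continuous_on ({0..t} \<times> UNIV) (\<lambda>p::real\<times>'a. DF (z (fst p)))"
      by (rule continuous_on_compose2[OF continuous_on_compose2[OF DF_continuous z_continuous] continuous_on_fst]) auto
    then have "continuous_on ({0..t} \<times> UNIV) (\<lambda>p::real\<times>'a. blinfun_apply (DF (z (fst p))) (snd p))"
      by (intro continuous_intros)
    then show ?thesis by (simp add: case_prod_beta')
  qed
  have "\<exists>v. solves_on (\<lambda>s v. DF (z s) v) t v \<and> v 0 = h \<and> (\<forall>s\<in>{0..t}. norm (v s - 0) \<le> norm h * exp (B * t))"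
    using linear_ode_lipschitz[OF B(2)]
    by (intro picard_tube.solution_exists picard_tube.intro[OF t_nonneg B(1) continuous_on_const cont]) auto
  then show ?thesis by blast
qed

definition Dflow :: "real \<Rightarrow> 'a \<Rightarrow> 'a" where
  "Dflow s h = (SOME v. solves_on (\<lambda>s v. DF (z s) v) t v \<and> v 0 = h) s"

lemma Dflow_solves: "solves_on (\<lambda>s v. DF (z s) v) t (\<lambda>s. Dflow s h)" and Dflow_0: "Dflow 0 h = h"
  using someI_ex[OF variational_solution_exists[of h]] unfolding Dflow_def by auto

lemma Dflow_continuous: "continuous_on {0..t} (\<lambda>s. Dflow s h)"
  using solves_on_continuous[OF Dflow_solves] .

lemma variational_solution_eq_Dflow:
  assumes "solves_on (\<lambda>s v. DF (z s) v) t v" "s \<in> {0..t}"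
  shows "v s = Dflow s (v 0)"
proof -
  obtain B where B: "B > 0" "\<forall>s\<in>{0..t}. norm (DF (z s)) \<le> B" using DFz_bounded by blast
  show ?thesis
    using linear_ode_lipschitz[OF B(2)] Dflow_0
    by (intro solves_on_unique[OF assms(1) Dflow_solves B(1) _ _ assms(2)]) auto
qed

lemma Dflow_linear: "s \<in> {0..t} \<Longrightarrow> linear (Dflow s)"
proof (rule linearI)
  fix a b assume s: "s \<in> {0..t}"
  have "solves_on (\<lambda>s v. DF (z s) v) t (\<lambda>r. Dflow r a + Dflow r b)"
    using Dflow_solves[of a] Dflow_solves[of b] unfolding solves_on_def
    by (auto intro!: has_vector_derivative_add simp: blinfun.add_right)
  from variational_solution_eq_Dflow[OF this s] show "Dflow s (a + b) = Dflow s a + Dflow s b"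
    by (simp add: Dflow_0)
next
  fix c a assume s: "s \<in> {0..t}"
  have "solves_on (\<lambda>s v. DF (z s) v) t (\<lambda>r. c *\<^sub>R Dflow r a)"
    using Dflow_solves[of a] unfolding solves_on_def
    by (auto intro!: bounded_linear.has_vector_derivative[OF bounded_linear_scaleR_right] simp: blinfun.scaleR_right)
  from variational_solution_eq_Dflow[OF this s] show "Dflow s (c *\<^sub>R a) = c *\<^sub>R Dflow s a"
    by (simp add: Dflow_0)
qed

lemma Dflow_bounded_linear: "s \<in> {0..t} \<Longrightarrow> bounded_linear (Dflow s)"
  using Dflow_linear linear_conv_bounded_linear by blast

lemma Dflow_near_identity:
  assumes "0 < B" "\<forall>s\<in>{0..t}. norm (DF (z s)) \<le> B" "s \<in> {0..t}"
  shows "norm (Dflow s h - h) \<le> (exp (B * s) - 1) * norm h"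
  using linear_solution_near_initial[OF Dflow_solves assms] by (simp add: Dflow_0)

lemma linearization_error_eq_integral:
  assumes y: "solves_on (\<lambda>_. F) t y" and r: "r \<in> {0..t}"
  defines "h \<equiv> y 0 - z 0"
  shows "(\<lambda>q. F (y q) - F (z q) - DF (z q) (Dflow q h)) integrable_on {0..r}"
    and "y r - z r - Dflow r h = integral {0..r} (\<lambda>q. F (y q) - F (z q) - DF (z q) (Dflow q h))"
proof -
  note iy = solves_on_integral[OF y r] and iz = solves_on_integral[OF z_solves r]
    and iv = solves_on_integral[OF Dflow_solves r]
  show "(\<lambda>q. F (y q) - F (z q) - DF (z q) (Dflow q h)) integrable_on {0..r}"
    using iy(1) iz(1) iv(1) by (intro integrable_diff)
  have "y r - z r - Dflow r h = integral {0..r} (\<lambda>q. F (y q)) - integral {0..r} (\<lambda>q. F (z q))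
      - integral {0..r} (\<lambda>q. DF (z q) (Dflow q h))"
    using iy(2) iz(2) iv(2) unfolding h_def Dflow_0 by (simp add: algebra_simps)
  also have "\<dots> = integral {0..r} (\<lambda>q. F (y q) - F (z q) - DF (z q) (Dflow q h))"
    using iy(1) iz(1) iv(1) by (simp add: integral_diff integrable_diff)
  finally show "y r - z r - Dflow r h = \<dots>" .
qed

text \<open>Gronwall applied to \<open>y - z - Dflow (y 0 - z 0)\<close>, whose derivative is the remainder
  \<open>F y - F z - DF z (y - z)\<close> plus \<open>DF z\<close> applied to itself.\<close>

lemma linearization_error_le:
  assumes y: "solves_on (\<lambda>_. F) t y" and B: "0 < B" "\<forall>s\<in>{0..t}. norm (DF (z s)) \<le> B"
    and rem: "\<And>s. s \<in> {0..t} \<Longrightarrow> norm (F (y s) - F (z s) - DF (z s) (y s - z s)) \<le> c"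
    and s: "s \<in> {0..t}"
  shows "norm (y s - z s - Dflow s (y 0 - z 0)) \<le> c * t * exp (B * t)"
proof -
  define h where "h = y 0 - z 0"
  define u where "u r = norm (y r - z r - Dflow r h)" for r
  have c0: "0 \<le> c" using rem[OF s] norm_ge_zero order_trans by blast
  have cu: "continuous_on {0..t} u" unfolding u_def
    using solves_on_continuous[OF y] z_continuous Dflow_continuous by (intro continuous_intros)
  have "u r \<le> c * t + B * integral {0..r} u" if r: "r \<in> {0..t}" for r
  proof -
    have sub: "{0..r} \<subseteq> {0..t}" using r by auto
    have "(\<lambda>q. c + B * u q) integrable_on {0..r}"
      using continuous_on_subset[OF cu sub] by (intro integrable_continuous_real continuous_intros)
    moreover have "norm (F (y q) - F (z q) - DF (z q) (Dflow q h)) \<le> c + B * u q" if "q \<in> {0..r}" for q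
    proof -
      have qt: "q \<in> {0..t}" using that sub by auto
      have "F (y q) - F (z q) - DF (z q) (Dflow q h)
          = (F (y q) - F (z q) - DF (z q) (y q - z q)) + DF (z q) (y q - z q - Dflow q h)"
        by (simp add: blinfun.diff_right)
      also have "norm \<dots> \<le> c + B * norm (y q - z q - Dflow q h)"
        using norm_triangle_le[OF add_mono[OF rem[OF qt] linear_ode_lipschitz[OF B(2) qt, of _ 0]]]
        by (simp add: blinfun.zero_right)
      finally show ?thesis unfolding u_def .
    qed
    ultimately have "u r \<le> integral {0..r} (\<lambda>q. c + B * u q)"
      unfolding u_def linearization_error_eq_integral(2)[OF y r, folded h_def]
      by (intro integral_norm_bound_integral linearization_error_eq_integral(1)[OF y r, folded h_def])
        (auto simp: u_def)
    also have "\<dots> = r * c + B * integral {0..r} u"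
      using continuous_on_subset[OF cu sub] r
      by (subst integral_add) (auto intro!: integrable_continuous_real continuous_intros simp: integral_const_real)
    also have "r * c \<le> c * t" using r c0 by (simp add: mult.commute mult_left_mono)
    finally show ?thesis by simp
  qed
  from gronwall_integral[OF t_nonneg B(1) cu this s] have "u s \<le> c * t * exp (B * s)" .
  also have "\<dots> \<le> c * t * exp (B * t)" using s B c0 t_nonneg by (intro mult_left_mono) auto
  finally show ?thesis unfolding u_def h_def .
qed

lemma flow_linearization:
  assumes e: "0 < e"
  shows "\<exists>d>0. \<forall>x. norm (x - z 0) < d \<longrightarrow> flow_exists F t x \<and>
           (\<forall>s\<in>{0..t}. norm (flow F s x - z s - Dflow s (x - z 0)) \<le> e * norm (x - z 0))"
proof -
  obtain \<delta> C where \<delta>: "0 < \<delta>" "0 < C" and near: "\<And>x. norm (x - z 0) < \<delta> \<Longrightarrow> flow_exists F t x \<and>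
      (\<forall>s\<in>{0..t}. norm (flow F s x - z s) \<le> C * norm (x - z 0))"
    using flow_near_trajectory by blast
  obtain B where B: "0 < B" "\<forall>s\<in>{0..t}. norm (DF (z s)) \<le> B" using DFz_bounded by blast
  define X where "X = C * t * exp (B * t)"
  define \<eta> where "\<eta> = e / (X + 1)"
  have X0: "0 \<le> X" unfolding X_def using \<delta> t_nonneg by simp
  then have \<eta>: "0 < \<eta>" and \<eta>X: "\<eta> * X \<le> e" using e by (auto simp: \<eta>_def field_simps)
  obtain \<rho> where \<rho>: "0 < \<rho>" and ud: "\<forall>c\<in>z ` {0..t}. \<forall>y. norm (y - c) \<le> \<rho> \<longrightarrow>
      norm (F y - F c - DF c (y - c)) \<le> \<eta> * norm (y - c)"
    using uniformly_differentiable_on_compact[OF F_has_derivative DF_continuous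
        compact_continuous_image[OF z_continuous] \<eta>] by auto
  have "flow_exists F t x \<and> (\<forall>s\<in>{0..t}. norm (flow F s x - z s - Dflow s (x - z 0)) \<le> e * norm (x - z 0))"
    if x: "norm (x - z 0) < min \<delta> (\<rho> / C)" for x
  proof -
    have fe: "flow_exists F t x" and close: "\<forall>s\<in>{0..t}. norm (flow F s x - z s) \<le> C * norm (x - z 0)"
      using near x by auto
    obtain y where y: "solves_on (\<lambda>_. F) t y" "y 0 = x" "\<forall>s\<in>{0..t}. flow F s x = y s"
      using flow_exists_solution[OF fe] by blast
    have "C * norm (x - z 0) \<le> \<rho>" using x \<delta> by (simp add: field_simps)
    then have rem: "norm (F (y s) - F (z s) - DF (z s) (y s - z s)) \<le> \<eta> * (C * norm (x - z 0))"
      if s: "s \<in> {0..t}" for s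
      using ud[rule_format, OF imageI[OF s], of "y s"] close[rule_format, OF s] y(3) s \<eta>
      by (smt (verit, best) mult_left_mono)
    have "norm (flow F s x - z s - Dflow s (x - z 0)) \<le> e * norm (x - z 0)" if s: "s \<in> {0..t}" for s
    proof -
      have "norm (y s - z s - Dflow s (y 0 - z 0)) \<le> \<eta> * (C * norm (x - z 0)) * t * exp (B * t)"
        using linearization_error_le[OF y(1) B rem s] .
      also have "\<dots> = (\<eta> * X) * norm (x - z 0)" unfolding X_def by simp
      also have "\<dots> \<le> e * norm (x - z 0)" using \<eta>X by (intro mult_right_mono) auto
      finally show ?thesis using y(2,3) s by simp
    qed
    then show ?thesis using fe by blast
  qed
  then show ?thesis using \<delta> \<rho> by (intro exI[of _ "min \<delta> (\<rho> / C)"]) auto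
qed

lemma flow_has_derivative:
  assumes s: "s \<in> {0..t}"
  shows "(flow F s has_derivative Dflow s) (at (z 0))"
  unfolding has_derivative_at_alt
proof (intro conjI allI impI)
  show "bounded_linear (Dflow s)" using Dflow_bounded_linear[OF s] .
  fix e :: real assume "0 < e"
  then show "\<exists>d>0. \<forall>y. norm (y - z 0) < d \<longrightarrow> norm (flow F s y - flow F s (z 0) - Dflow s (y - z 0)) \<le> e * norm (y - z 0)"
    using flow_linearization s flow_z[OF s] by fastforce
qed

lemma bounded_linear_integral_Dflow:
  fixes Dg :: "'a \<Rightarrow> 'a \<Rightarrow>\<^sub>L real"
  assumes Dg_cont: "continuous_on UNIV Dg"
  shows "bounded_linear (\<lambda>h. integral {0..t} (\<lambda>r. Dg (z r) (Dflow r h)))"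
proof -
  have int: "(\<lambda>r. Dg (z r) (Dflow r h)) integrable_on {0..t}" for h
    using continuous_on_compose2[OF Dg_cont z_continuous] Dflow_continuous
    by (intro integrable_continuous_real continuous_intros) auto
  have "linear (\<lambda>h. integral {0..t} (\<lambda>r. Dg (z r) (Dflow r h)))"
  proof (rule linearI)
    fix a b
    have "integral {0..t} (\<lambda>r. Dg (z r) (Dflow r (a + b)))
        = integral {0..t} (\<lambda>r. Dg (z r) (Dflow r a) + Dg (z r) (Dflow r b))"
      by (rule integral_cong) (simp add: linear_add[OF Dflow_linear] blinfun.add_right)
    then show "integral {0..t} (\<lambda>r. Dg (z r) (Dflow r (a + b)))
        = integral {0..t} (\<lambda>r. Dg (z r) (Dflow r a)) + integral {0..t} (\<lambda>r. Dg (z r) (Dflow r b))"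
      using int by (simp add: integral_add)
  next
    fix c a
    have "integral {0..t} (\<lambda>r. Dg (z r) (Dflow r (c *\<^sub>R a))) = integral {0..t} (\<lambda>r. c * Dg (z r) (Dflow r a))"
      by (rule integral_cong) (simp add: linear_scale[OF Dflow_linear] blinfun.scaleR_right)
    then show "integral {0..t} (\<lambda>r. Dg (z r) (Dflow r (c *\<^sub>R a))) = c *\<^sub>R integral {0..t} (\<lambda>r. Dg (z r) (Dflow r a))"
      by simp
  qed
  then show ?thesis using linear_conv_bounded_linear by blast
qed

lemma flow_comp_linearization:
  fixes g :: "'a \<Rightarrow> 'b::real_normed_vector"
  assumes g_deriv: "\<And>y. (g has_derivative blinfun_apply (Dg y)) (at y)" and Dg_cont: "continuous_on UNIV Dg"
    and e: "0 < e"
  shows "\<exists>d>0. \<forall>x. norm (x - z 0) < d \<longrightarrow> flow_exists F t x \<and>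
      (\<forall>s\<in>{0..t}. norm (g (flow F s x) - g (z s) - Dg (z s) (Dflow s (x - z 0))) \<le> e * norm (x - z 0))"
proof -
  obtain Cg where Cg: "0 < Cg" "\<forall>r\<in>{0..t}. norm (Dg (z r)) \<le> Cg"
    using continuous_on_bounded_on_interval continuous_on_compose2[OF Dg_cont z_continuous] by blast
  obtain \<delta> C where \<delta>: "0 < \<delta>" "0 < C" and near: "\<And>x. norm (x - z 0) < \<delta> \<Longrightarrow> flow_exists F t x \<and>
      (\<forall>s\<in>{0..t}. norm (flow F s x - z s) \<le> C * norm (x - z 0))"
    using flow_near_trajectory by blast
  define \<eta> where "\<eta> = e / 2 / C"
  define \<epsilon> where "\<epsilon> = e / 2 / Cg"
  have \<eta>: "0 < \<eta>" and \<epsilon>: "0 < \<epsilon>" unfolding \<eta>_def \<epsilon>_def using e \<delta> Cg by auto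
  obtain \<rho> where \<rho>: "0 < \<rho>" and ud: "\<forall>c\<in>z ` {0..t}. \<forall>y. norm (y - c) \<le> \<rho> \<longrightarrow>
      norm (g y - g c - Dg c (y - c)) \<le> \<eta> * norm (y - c)"
    using uniformly_differentiable_on_compact[OF g_deriv Dg_cont
        compact_continuous_image[OF z_continuous] \<eta>] by auto
  obtain d1 where d1: "0 < d1" and lin: "\<And>x. norm (x - z 0) < d1 \<Longrightarrow>
      \<forall>s\<in>{0..t}. norm (flow F s x - z s - Dflow s (x - z 0)) \<le> \<epsilon> * norm (x - z 0)"
    using flow_linearization[OF \<epsilon>] by blast
  have "norm (g (flow F s x) - g (z s) - Dg (z s) (Dflow s (x - z 0))) \<le> e * norm (x - z 0)"
    if x: "norm (x - z 0) < min \<delta> (min d1 (\<rho> / C))" and s: "s \<in> {0..t}" for x s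
  proof -
    define h where "h = x - z 0"
    have close: "norm (flow F s x - z s) \<le> C * norm h" and "C * norm h \<le> \<rho>"
      using near[of x] x s \<delta> unfolding h_def by (auto simp: field_simps)
    have "g (flow F s x) - g (z s) - Dg (z s) (Dflow s h)
        = (g (flow F s x) - g (z s) - Dg (z s) (flow F s x - z s)) + Dg (z s) (flow F s x - z s - Dflow s h)"
      by (simp add: blinfun.diff_right)
    also have "norm \<dots> \<le> \<eta> * (C * norm h) + Cg * (\<epsilon> * norm h)"
    proof (rule norm_triangle_le[OF add_mono])
      show "norm (g (flow F s x) - g (z s) - Dg (z s) (flow F s x - z s)) \<le> \<eta> * (C * norm h)"
        using ud[rule_format, OF imageI[OF s], of "flow F s x"] close \<open>C * norm h \<le> \<rho>\<close> \<eta>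
        by (smt (verit, best) mult_left_mono)
      show "norm (Dg (z s) (flow F s x - z s - Dflow s h)) \<le> Cg * (\<epsilon> * norm h)"
        using norm_blinfun[of "Dg (z s)"] Cg s lin[of x] x unfolding h_def
        by (meson min_less_iff_conj mult_mono norm_ge_zero order_trans)
    qed
    also have "\<eta> * (C * norm h) + Cg * (\<epsilon> * norm h) = e * norm h"
      using \<delta> Cg unfolding \<eta>_def \<epsilon>_def by (simp add: field_simps)
    finally show ?thesis unfolding h_def .
  qed
  then show ?thesis using near \<delta> d1 \<rho> by (intro exI[of _ "min \<delta> (min d1 (\<rho> / C))"]) auto
qed

lemma integral_along_flow_has_derivative:
  fixes g :: "'a \<Rightarrow> real"
  assumes g_deriv: "\<And>y. (g has_derivative blinfun_apply (Dg y)) (at y)" and Dg_cont: "continuous_on UNIV Dg"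
  shows "((\<lambda>x. integral {0..t} (\<lambda>r. g (flow F r x))) has_derivative
           (\<lambda>h. integral {0..t} (\<lambda>r. Dg (z r) (Dflow r h)))) (at (z 0))"
  unfolding has_derivative_at_alt
proof (intro conjI allI impI bounded_linear_integral_Dflow[OF Dg_cont])
  fix e :: real assume e: "0 < e"
  have g_cont: "continuous_on UNIV g"
    using g_deriv has_derivative_continuous continuous_at_imp_continuous_on by blast
  obtain d where d: "0 < d" and lin: "\<And>x. norm (x - z 0) < d \<Longrightarrow> flow_exists F t x \<and>
      (\<forall>s\<in>{0..t}. norm (g (flow F s x) - g (z s) - Dg (z s) (Dflow s (x - z 0))) \<le> e / (t + 1) * norm (x - z 0))"
    using flow_comp_linearization[OF g_deriv Dg_cont, of "e / (t + 1)"] e t_nonneg by auto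
  have "norm (integral {0..t} (\<lambda>r. g (flow F r x)) - integral {0..t} (\<lambda>r. g (flow F r (z 0)))
      - integral {0..t} (\<lambda>r. Dg (z r) (Dflow r (x - z 0)))) \<le> e * norm (x - z 0)"
    if x: "norm (x - z 0) < d" for x
  proof -
    define h where "h = x - z 0"
    have int: "(\<lambda>r. g (flow F r x)) integrable_on {0..t}" "(\<lambda>r. g (z r)) integrable_on {0..t}"
      "(\<lambda>r. Dg (z r) (Dflow r h)) integrable_on {0..t}"
      using continuous_on_compose2[OF g_cont flow_continuous] continuous_on_compose2[OF g_cont z_continuous]
        continuous_on_compose2[OF Dg_cont z_continuous] Dflow_continuous lin[OF x]
      by (auto intro!: integrable_continuous_real continuous_intros)
    have "integral {0..t} (\<lambda>r. g (flow F r (z 0))) = integral {0..t} (\<lambda>r. g (z r))"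
      by (rule integral_cong) (simp add: flow_z)
    then have "integral {0..t} (\<lambda>r. g (flow F r x)) - integral {0..t} (\<lambda>r. g (flow F r (z 0)))
        - integral {0..t} (\<lambda>r. Dg (z r) (Dflow r h))
        = integral {0..t} (\<lambda>r. g (flow F r x) - g (z r) - Dg (z r) (Dflow r h))"
      using int by (simp add: integral_diff integrable_diff)
    also have "norm \<dots> \<le> integral {0..t} (\<lambda>r. e / (t + 1) * norm h)"
      using int lin[OF x] unfolding h_def
      by (intro integral_norm_bound_integral integrable_diff integrable_const_ivl) auto
    also have "\<dots> = t / (t + 1) * (e * norm h)" using t_nonneg by simp
    also have "\<dots> \<le> e * norm h" using t_nonneg e by (intro mult_left_le_one_le) auto
    finally show ?thesis unfolding h_def .
  qed
  then show "\<exists>d>0. \<forall>x. norm (x - z 0) < d \<longrightarrow>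
      norm (integral {0..t} (\<lambda>r. g (flow F r x)) - integral {0..t} (\<lambda>r. g (flow F r (z 0)))
        - integral {0..t} (\<lambda>r. Dg (z r) (Dflow r (x - z 0)))) \<le> e * norm (x - z 0)"
    using d by blast
qed

end

section \<open>Linear algebra of \<open>(q,P)\<close>-charts\<close>

lemma lower_block_bij:
  fixes A :: "('n::finite) phase \<Rightarrow> 'n phase"
  assumes bl: "bounded_linear A" and inj0: "\<And>v. snd (A (0, v)) = 0 \<Longrightarrow> v = 0"
  shows "bij (lower_block A)"
proof -
  have "bounded_linear (\<lambda>v::real^'n. snd (A (0, v)))"
    by (intro bounded_linear_compose[OF bounded_linear_snd] bounded_linear_compose[OF bl]
        bounded_linear_Pair bounded_linear_zero bounded_linear_ident)
  then have lin: "linear (lower_block A)" unfolding lower_block_def by (simp add: bounded_linear.linear)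
  then have "inj (lower_block A)" unfolding linear_injective_0[OF lin] lower_block_def using inj0 by blast
  then show ?thesis using linear_inj_imp_surj[OF lin] by (simp add: bij_def)
qed

lemma lower_block_bij_near_identity:
  fixes A :: "('n::finite) phase \<Rightarrow> 'n phase"
  assumes bl: "bounded_linear A" and near: "\<And>h. norm (A h - h) \<le> c * norm h" and c: "c < 1"
  shows "bij (lower_block A)"
proof (rule lower_block_bij[OF bl])
  fix v :: "real^'n" assume v: "snd (A (0, v)) = 0"
  have "norm v = norm (snd (A (0, v) - (0, v)))" using v by simp
  also have "\<dots> \<le> norm (A (0, v) - (0, v))" by (metis norm_snd_le prod.collapse)
  also have "\<dots> \<le> c * norm v" using near[of "(0, v)"] by (simp add: norm_prod_def)
  finally have "(1 - c) * norm v \<le> 0" by (simp add: algebra_simps)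
  then show "v = 0" using c by (simp add: mult_le_0_iff)
qed

lemma diffeo_on_inverse_has_derivative:
  fixes \<psi> :: "'a::euclidean_space \<Rightarrow> 'b::euclidean_space"
  assumes U: "open U" "open (\<psi> ` U)" "diffeo_on U (\<psi> ` U) \<psi>"
    and x: "x \<in> U" and \<psi>_deriv: "(\<psi> has_derivative D\<psi>) (at x)"
  obtains N where "(inv_into U \<psi> has_derivative N) (at (\<psi> x))" "\<And>h. N (D\<psi> h) = h" "\<And>k. D\<psi> (N k) = k"
proof -
  define \<iota> where "\<iota> = inv_into U \<psi>"
  have inj: "inj_on \<psi> U" and "\<iota> differentiable_on \<psi> ` U"
    using U(3) unfolding diffeo_on_def \<iota>_def by auto
  then obtain N where N: "(\<iota> has_derivative N) (at (\<psi> x))"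
    using x unfolding differentiable_on_eq_differentiable_at[OF U(2)] differentiable_def by blast
  have \<iota>x: "\<iota> (\<psi> x) = x" using inv_into_f_f[OF inj x] \<iota>_def by simp
  have "((\<iota> \<circ> \<psi>) has_derivative (\<lambda>h. h)) (at x)"
    by (rule has_derivative_transform_within_open[OF has_derivative_ident U(1) x])
       (use inj in \<open>auto simp: \<iota>_def\<close>)
  then have left: "N \<circ> D\<psi> = (\<lambda>h. h)"
    using has_derivative_unique[OF diff_chain_at[OF \<psi>_deriv N]] by blast
  have "((\<psi> \<circ> \<iota>) has_derivative (\<lambda>h. h)) (at (\<psi> x))"
    by (rule has_derivative_transform_within_open[OF has_derivative_ident U(2)])
       (use x in \<open>auto simp: \<iota>_def f_inv_into_f\<close>)
  moreover have "((\<psi> \<circ> \<iota>) has_derivative (D\<psi> \<circ> N)) (at (\<psi> x))"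
    using diff_chain_at[OF N] \<psi>_deriv \<iota>x by simp
  ultimately have right: "D\<psi> \<circ> N = (\<lambda>h. h)" using has_derivative_unique by blast
  show ?thesis using that N left right unfolding \<iota>_def by (simp add: fun_eq_iff)
qed

lemma qP_map_inverse_has_derivative:
  fixes \<Phi> :: "('n::finite) phase \<Rightarrow> 'n phase"
  assumes U: "open U" "open (qP_map \<Phi> ` U)" "diffeo_on U (qP_map \<Phi> ` U) (qP_map \<Phi>)"
    and x: "x \<in> U" and \<Phi>_deriv: "(\<Phi> has_derivative M) (at x)"
  obtains N where "(inv_into U (qP_map \<Phi>) has_derivative N) (at (qP_map \<Phi> x))"
    and "\<And>h. N (fst h, snd (M h)) = h" and "\<And>k. (fst (N k), snd (M (N k))) = k"
proof -
  have "(qP_map \<Phi> has_derivative (\<lambda>h. (fst h, snd (M h)))) (at x)"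
    unfolding qP_map_def[abs_def]
    by (intro has_derivative_Pair has_derivative_fst has_derivative_snd has_derivative_ident \<Phi>_deriv)
  from diffeo_on_inverse_has_derivative[OF U x this] that show ?thesis by blast
qed

lemma qP_map_diffeo_lower_block_invertible:
  fixes \<Phi> :: "('n::finite) phase \<Rightarrow> 'n phase"
  assumes U: "open U" "open (qP_map \<Phi> ` U)" "diffeo_on U (qP_map \<Phi> ` U) (qP_map \<Phi>)"
    and x: "x \<in> U" and \<Phi>_deriv: "(\<Phi> has_derivative M) (at x)"
  shows "lower_block_invertible_at \<Phi> x"
proof -
  obtain N where N: "(inv_into U (qP_map \<Phi>) has_derivative N) (at (qP_map \<Phi> x))"
    and left: "\<And>h. N (fst h, snd (M h)) = h"
    using qP_map_inverse_has_derivative[OF U x \<Phi>_deriv] by blast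
  have "bij (lower_block M)"
  proof (rule lower_block_bij)
    show "bounded_linear M" using \<Phi>_deriv has_derivative_bounded_linear by blast
    fix v :: "real^'n" assume "snd (M (0, v)) = 0"
    then have "(0, v) = N 0" using left[of "(0, v)"] by (simp add: zero_prod_def)
    also have "N 0 = 0" using N has_derivative_bounded_linear linear_simps(3) by blast
    finally show "v = 0" by (simp add: zero_prod_def)
  qed
  then show ?thesis unfolding lower_block_invertible_at_def using \<Phi>_deriv by blast
qed

lemma generating_function_has_gradient:
  fixes \<Phi> :: "('n::finite) phase \<Rightarrow> 'n phase" and A :: "'n phase \<Rightarrow> real"
  assumes \<iota>_deriv: "(\<iota> has_derivative N) (at y)" and \<iota>y: "\<iota> y = x"
    and \<Phi>_deriv: "(\<Phi> has_derivative M) (at x)"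
    and A_deriv: "(A has_derivative (\<lambda>h. snd (\<Phi> x) \<bullet> fst (M h) - snd x \<bullet> fst h)) (at x)"
    and inverse: "\<And>k. (fst (N k), snd (M (N k))) = k"
  shows "has_gradient (\<lambda>y. snd (\<Phi> (\<iota> y)) \<bullet> fst (\<Phi> (\<iota> y)) - A (\<iota> y)) (snd x, fst (\<Phi> x)) y"
proof -
  define G where "G x = snd (\<Phi> x) \<bullet> fst (\<Phi> x) - A x" for x
  have "(G has_derivative (\<lambda>h. snd (M h) \<bullet> fst (\<Phi> x) + snd x \<bullet> fst h)) (at x)"
    unfolding G_def
    by (auto intro!: derivative_eq_intros \<Phi>_deriv A_deriv simp: algebra_simps inner_commute)
  then have "((G \<circ> \<iota>) has_derivative (\<lambda>k. snd (M (N k)) \<bullet> fst (\<Phi> x) + snd x \<bullet> fst (N k))) (at y)"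
    using diff_chain_at[OF \<iota>_deriv] \<iota>y by (simp add: o_def)
  moreover have "snd (M (N k)) \<bullet> fst (\<Phi> x) + snd x \<bullet> fst (N k) = (snd x, fst (\<Phi> x)) \<bullet> k" for k
    using inverse[of k] by (metis fst_conv snd_conv inner_Pair inner_commute add.commute)
  ultimately show ?thesis unfolding has_gradient_def G_def by (simp add: o_def)
qed

lemma scaled_generating_function_has_gradient:
  fixes \<Phi> :: "('n::finite) phase \<Rightarrow> 'n phase"
  assumes S: "has_gradient S (snd x, fst (\<Phi> x)) (fst x, snd (\<Phi> x))"
  shows "has_gradient (\<lambda>y. (S y - fst y \<bullet> snd y) / dt) ((1/dt) *\<^sub>R JmatT (\<Phi> x - x)) (I1 x + I2 (\<Phi> x))"
proof -
  have y: "I1 x + I2 (\<Phi> x) = (fst x, snd (\<Phi> x))" unfolding I1_def I2_def by simp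
  have "((\<lambda>y. S y - fst y \<bullet> snd y) has_derivative
      (\<lambda>k. (snd x, fst (\<Phi> x)) \<bullet> k - (fst x \<bullet> snd k + fst k \<bullet> snd (\<Phi> x)))) (at (fst x, snd (\<Phi> x)))"
    using S unfolding has_gradient_def by (auto intro!: derivative_eq_intros)
  then have "((\<lambda>y. (S y - fst y \<bullet> snd y) / dt) has_derivative
      (\<lambda>k. ((snd x, fst (\<Phi> x)) \<bullet> k - (fst x \<bullet> snd k + fst k \<bullet> snd (\<Phi> x))) / dt)) (at (fst x, snd (\<Phi> x)))"
    by (rule bounded_linear.has_derivative[OF bounded_linear_divide])
  moreover have "(snd x, fst (\<Phi> x)) \<bullet> k - (fst x \<bullet> snd k + fst k \<bullet> snd (\<Phi> x))
      = JmatT (\<Phi> x - x) \<bullet> k" for k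
    unfolding JmatT_def
    by (simp add: inner_prod_def inner_diff_left inner_diff_right inner_commute algebra_simps)
  ultimately have "((\<lambda>y. (S y - fst y \<bullet> snd y) / dt) has_derivative (\<lambda>k. JmatT (\<Phi> x - x) \<bullet> k / dt))
      (at (fst x, snd (\<Phi> x)))"
    by simp
  then show ?thesis unfolding has_gradient_def y by (rule has_derivative_eq_rhs) (simp add: fun_eq_iff)
qed

section \<open>Hamiltonian flows and the action\<close>

lemma bounded_linear_Jmat: "bounded_linear (Jmat :: ('n::finite) phase \<Rightarrow> 'n phase)"
  unfolding Jmat_def by (intro bounded_linear_Pair bounded_linear_snd bounded_linear_minus[OF bounded_linear_fst])

definition J_blinfun :: "('n::finite) phase \<Rightarrow>\<^sub>L 'n phase" where
  "J_blinfun = Blinfun Jmat"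

lemma blinfun_apply_J_blinfun [simp]: "blinfun_apply J_blinfun = Jmat"
  unfolding J_blinfun_def by (rule bounded_linear_Blinfun_apply[OF bounded_linear_Jmat])

lemma norm_J_blinfun_compose_le:
  fixes A :: "('n::finite) phase \<Rightarrow>\<^sub>L 'n phase"
  shows "norm (J_blinfun o\<^sub>L A) \<le> norm A"
proof -
  have "norm (J_blinfun :: 'n phase \<Rightarrow>\<^sub>L 'n phase) \<le> 1"
    by (rule norm_blinfun_bound) (auto simp: Jmat_def norm_prod_def)
  then show ?thesis using norm_blinfun_compose[of J_blinfun A] norm_ge_zero[of A]
    by (smt (verit) mult_right_mono mult_cancel_right1)
qed

text \<open>The integrand of the action, \<open>p \<cdot> q' - H\<close> with \<open>q' = \<partial>\<^sub>pH\<close>.\<close>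

definition lagrangian :: "(('n::finite) phase \<Rightarrow> real) \<Rightarrow> ('n phase \<Rightarrow> 'n phase) \<Rightarrow> 'n phase \<Rightarrow> real" where
  "lagrangian H gH x = snd x \<bullet> snd (gH x) - H x"

definition Dlagrangian ::
    "(('n::finite) phase \<Rightarrow> 'n phase) \<Rightarrow> ('n phase \<Rightarrow> ('n phase \<Rightarrow>\<^sub>L 'n phase)) \<Rightarrow> 'n phase \<Rightarrow> ('n phase \<Rightarrow>\<^sub>L real)" where
  "Dlagrangian gH Hess x = blinfun_inner_left ((0, snd (gH x)) - gH x) + (blinfun_inner_left (0, snd x) o\<^sub>L Hess x)"

lemma Dlagrangian_apply:
  "blinfun_apply (Dlagrangian gH Hess x) h = snd h \<bullet> snd (gH x) + snd x \<bullet> snd (Hess x h) - gH x \<bullet> h"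
  unfolding Dlagrangian_def by (simp add: blinfun.add_left inner_diff_right inner_Pair_0 inner_commute)

definition action :: "(('n::finite) phase \<Rightarrow> real) \<Rightarrow> ('n phase \<Rightarrow> 'n phase) \<Rightarrow> real \<Rightarrow> 'n phase \<Rightarrow> real" where
  "action H gH t x = integral {0..t} (\<lambda>r. lagrangian H gH (flow (ham_vf gH) r x))"

locale hamiltonian =
  fixes H :: "('n::finite) phase \<Rightarrow> real" and gH :: "'n phase \<Rightarrow> 'n phase"
    and Hess :: "'n phase \<Rightarrow> ('n phase \<Rightarrow>\<^sub>L 'n phase)"
  assumes H_gradient: "\<And>x. has_gradient H (gH x) x"
    and gH_has_derivative: "\<And>x. (gH has_derivative blinfun_apply (Hess x)) (at x)"
    and Hess_continuous: "continuous_on UNIV Hess"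
begin

sublocale c1_vector_field "ham_vf gH" "\<lambda>x. J_blinfun o\<^sub>L Hess x"
proof
  fix x
  have "blinfun_apply (J_blinfun o\<^sub>L Hess x) = (\<lambda>h. Jmat (Hess x h))" by (simp add: fun_eq_iff)
  then show "(ham_vf gH has_derivative blinfun_apply (J_blinfun o\<^sub>L Hess x)) (at x)"
    using bounded_linear.has_derivative[OF bounded_linear_Jmat gH_has_derivative[of x]]
    unfolding ham_vf_def[abs_def] by simp
  show "continuous_on UNIV (\<lambda>x. J_blinfun o\<^sub>L Hess x)"
    using Hess_continuous by (intro continuous_intros)
qed

lemma lagrangian_has_derivative:
  "(lagrangian H gH has_derivative blinfun_apply (Dlagrangian gH Hess x)) (at x)"
proof -
  have "((\<lambda>x. snd x \<bullet> snd (gH x) - H x) has_derivative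
      (\<lambda>h. snd x \<bullet> snd (Hess x h) + snd h \<bullet> snd (gH x) - gH x \<bullet> h)) (at x)"
    using H_gradient[of x] unfolding has_gradient_def
    by (auto intro!: derivative_eq_intros gH_has_derivative)
  then show ?thesis unfolding lagrangian_def[abs_def] by (simp add: Dlagrangian_apply[abs_def] algebra_simps)
qed

lemma Dlagrangian_continuous: "continuous_on UNIV (Dlagrangian gH Hess)"
proof -
  have "continuous_on UNIV gH"
    using gH_has_derivative has_derivative_continuous continuous_at_imp_continuous_on by blast
  then show ?thesis unfolding Dlagrangian_def[abs_def] using Hess_continuous by (intro continuous_intros)
qed

end

locale hamiltonian_trajectory =
  hamiltonian H gH Hess + c1_trajectory "ham_vf gH" "\<lambda>x. J_blinfun o\<^sub>L Hess x" z t
  for H gH Hess z t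
begin

text \<open>\<open>P \<cdot> \<delta>Q\<close> along the trajectory has derivative \<open>Dlagrangian (z s) (\<delta>z s)\<close>.\<close>

lemma action_variation_integral:
  "integral {0..t} (\<lambda>r. Dlagrangian gH Hess (z r) (Dflow r h)) = snd (z t) \<bullet> fst (Dflow t h) - snd (z 0) \<bullet> fst h"
proof -
  have "((\<lambda>s. snd (z s) \<bullet> fst (Dflow s h)) has_vector_derivative Dlagrangian gH Hess (z s) (Dflow s h))
      (at s within {0..t})" if s: "s \<in> {0..t}" for s
  proof -
    have "(z has_vector_derivative ham_vf gH (z s)) (at s within {0..t})"
      using z_solves s unfolding solves_on_def by auto
    moreover have "((\<lambda>s. Dflow s h) has_vector_derivative Jmat (Hess (z s) (Dflow s h))) (at s within {0..t})"
      using Dflow_solves s unfolding solves_on_def by auto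
    ultimately have "((\<lambda>s. snd (z s) \<bullet> fst (Dflow s h)) has_vector_derivative
        snd (z s) \<bullet> fst (Jmat (Hess (z s) (Dflow s h))) + snd (ham_vf gH (z s)) \<bullet> fst (Dflow s h)) (at s within {0..t})"
      by (intro bounded_bilinear.has_vector_derivative[OF bounded_bilinear_inner]
          bounded_linear.has_vector_derivative[OF bounded_linear_snd]
          bounded_linear.has_vector_derivative[OF bounded_linear_fst])
    moreover have "snd (z s) \<bullet> fst (Jmat (Hess (z s) (Dflow s h))) + snd (ham_vf gH (z s)) \<bullet> fst (Dflow s h)
        = Dlagrangian gH Hess (z s) (Dflow s h)"
      by (simp add: Dlagrangian_apply ham_vf_def Jmat_def inner_prod_def algebra_simps inner_commute)
    ultimately show ?thesis by simp
  qed
  then have "((\<lambda>r. Dlagrangian gH Hess (z r) (Dflow r h)) has_integral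
      (snd (z t) \<bullet> fst (Dflow t h) - snd (z 0) \<bullet> fst (Dflow 0 h))) {0..t}"
    by (intro fundamental_theorem_of_calculus t_nonneg)
  then show ?thesis by (simp add: integral_unique Dflow_0)
qed

lemma action_has_derivative:
  "(action H gH t has_derivative (\<lambda>h. snd (z t) \<bullet> fst (Dflow t h) - snd (z 0) \<bullet> fst h)) (at (z 0))"
  using integral_along_flow_has_derivative[OF lagrangian_has_derivative Dlagrangian_continuous]
  unfolding action_def[abs_def] action_variation_integral .

end

context hamiltonian
begin

lemma flow_action_has_derivative:
  assumes "flow_exists (ham_vf gH) t x"
  obtains M where "(flow (ham_vf gH) t has_derivative M) (at x)"
    and "(action H gH t has_derivative (\<lambda>h. snd (flow (ham_vf gH) t x) \<bullet> fst (M h) - snd x \<bullet> fst h)) (at x)"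
proof -
  obtain z where z: "solves_on (\<lambda>_. ham_vf gH) t z" "z 0 = x" "\<forall>s\<in>{0..t}. flow (ham_vf gH) s x = z s"
    using flow_exists_solution[OF assms] by blast
  have t: "0 \<le> t" using assms unfolding flow_exists_def by simp
  interpret hamiltonian_trajectory H gH Hess z t
    using z(1) t by unfold_locales
  have t_in: "t \<in> {0..t}" using t by simp
  have "(flow (ham_vf gH) t has_derivative Dflow t) (at x)"
    using flow_has_derivative[OF t_in] z(2) by simp
  moreover have "flow (ham_vf gH) t x = z t" using z(3) t_in by blast
  then have "(action H gH t has_derivative (\<lambda>h. snd (flow (ham_vf gH) t x) \<bullet> fst (Dflow t h) - snd x \<bullet> fst h)) (at x)"
    using action_has_derivative z(2) by simp
  ultimately show ?thesis by (rule that)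
qed

lemma lower_block_invertible_flow:
  assumes fe: "flow_exists (ham_vf gH) t x" and stays: "\<forall>s\<in>{0..t}. flow (ham_vf gH) s x \<in> K"
    and B: "0 < B" "\<forall>y\<in>K. norm (Hess y) \<le> B" "B * t < ln 2"
  shows "lower_block_invertible_at (flow (ham_vf gH) t) x"
proof -
  obtain z where z: "solves_on (\<lambda>_. ham_vf gH) t z" "z 0 = x" "\<forall>s\<in>{0..t}. flow (ham_vf gH) s x = z s"
    using flow_exists_solution[OF fe] by blast
  have t: "0 \<le> t" using fe unfolding flow_exists_def by simp
  interpret hamiltonian_trajectory H gH Hess z t
    using z(1) t by unfold_locales
  have "norm (J_blinfun o\<^sub>L Hess (z s)) \<le> B" if s: "s \<in> {0..t}" for s
  proof -
    have "z s \<in> K" using stays[rule_format, OF s] z(3)[rule_format, OF s] by simp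
    then show ?thesis using norm_J_blinfun_compose_le[of "Hess (z s)"] B(2) by (meson order_trans)
  qed
  then have near: "norm (Dflow t h - h) \<le> (exp (B * t) - 1) * norm h" for h
    using Dflow_near_identity[OF B(1)] t by simp
  have "exp (B * t) < exp (ln 2)" using B(3) by (rule exp_less_mono)
  then have "exp (B * t) < 2" by simp
  then have "bij (lower_block (Dflow t))"
    using lower_block_bij_near_identity[OF Dflow_bounded_linear near] t by auto
  then show ?thesis
    unfolding lower_block_invertible_at_def using flow_has_derivative t z(2) by auto
qed

lemma qP_chart_lower_block_invertible:
  assumes chart: "qP_chart (ham_vf gH) t U" and x: "x \<in> U"
  shows "lower_block_invertible_at (flow (ham_vf gH) t) x"
proof -
  have "flow_exists (ham_vf gH) t x" using chart x unfolding qP_chart_def by auto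
  then obtain M where "(flow (ham_vf gH) t has_derivative M) (at x)"
    by (rule flow_action_has_derivative)
  with chart x show ?thesis unfolding qP_chart_def by (intro qP_map_diffeo_lower_block_invertible) auto
qed

lemma qP_chart_generating_function:
  assumes chart: "qP_chart (ham_vf gH) t U" and x: "x \<in> U"
  defines "\<iota> \<equiv> inv_into U (qP_map (flow (ham_vf gH) t))"
  shows "has_gradient (\<lambda>y. snd (flow (ham_vf gH) t (\<iota> y)) \<bullet> fst (flow (ham_vf gH) t (\<iota> y)) - action H gH t (\<iota> y))
      (snd x, fst (flow (ham_vf gH) t x)) (qP_map (flow (ham_vf gH) t) x)"
proof -
  have U: "open U" "open (qP_map (flow (ham_vf gH) t) ` U)"
      "diffeo_on U (qP_map (flow (ham_vf gH) t) ` U) (qP_map (flow (ham_vf gH) t))"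
    and fe: "flow_exists (ham_vf gH) t x"
    using chart x unfolding qP_chart_def by auto
  obtain M where M: "(flow (ham_vf gH) t has_derivative M) (at x)"
    and A: "(action H gH t has_derivative (\<lambda>h. snd (flow (ham_vf gH) t x) \<bullet> fst (M h) - snd x \<bullet> fst h)) (at x)"
    by (rule flow_action_has_derivative[OF fe])
  obtain N where N: "(\<iota> has_derivative N) (at (qP_map (flow (ham_vf gH) t) x))"
    and right: "\<And>k. (fst (N k), snd (M (N k))) = k"
    using qP_map_inverse_has_derivative[OF U x M] unfolding \<iota>_def by blast
  have "\<iota> (qP_map (flow (ham_vf gH) t) x) = x"
    using U(3) x unfolding diffeo_on_def \<iota>_def by (simp add: inv_into_f_f)
  from generating_function_has_gradient[OF N this M A right] show ?thesis .
qed


lemma qP_chart_generating_function_exists: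
  assumes chart: "qP_chart (ham_vf gH) t U"
  defines "\<Phi> \<equiv> flow (ham_vf gH) t" and "\<psi> \<equiv> qP_map (flow (ham_vf gH) t)"
  shows "\<exists>S. (\<forall>y\<in>\<psi> ` U. has_gradient S (snd (inv_into U \<psi> y), fst (\<Phi> (inv_into U \<psi> y))) y) \<and>
      (\<forall>x\<in>U. has_gradient (\<lambda>y. (S y - fst y \<bullet> snd y) / t) ((1/t) *\<^sub>R JmatT (\<Phi> x - x)) (I1 x + I2 (\<Phi> x)))"
proof -
  define \<iota> where "\<iota> = inv_into U \<psi>"
  define S where "S y = snd (\<Phi> (\<iota> y)) \<bullet> fst (\<Phi> (\<iota> y)) - action H gH t (\<iota> y)" for y
  have grad: "has_gradient S (snd x, fst (\<Phi> x)) (\<psi> x)" if "x \<in> U" for x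
    using qP_chart_generating_function[OF chart that] unfolding S_def \<iota>_def \<Phi>_def \<psi>_def .
  have "\<iota> (\<psi> x) = x" if "x \<in> U" for x
    using chart that unfolding qP_chart_def diffeo_on_def \<iota>_def \<psi>_def \<Phi>_def by (simp add: inv_into_f_f)
  with grad have "\<forall>y\<in>\<psi> ` U. has_gradient S (snd (\<iota> y), fst (\<Phi> (\<iota> y))) y" by auto
  moreover have "has_gradient (\<lambda>y. (S y - fst y \<bullet> snd y) / t) ((1/t) *\<^sub>R JmatT (\<Phi> x - x)) (I1 x + I2 (\<Phi> x))"
    if "x \<in> U" for x
    using grad[OF that] unfolding \<psi>_def qP_map_def \<Phi>_def by (rule scaled_generating_function_has_gradient)
  ultimately show ?thesis unfolding \<iota>_def by blast
qed
end

text \<open>The witness \<open>B\<close> lies strictly between \<open>L\<^sub>K\<close> and \<open>log 2 / \<Delta>t\<close>; it is positive even if \<open>L\<^sub>K = 0\<close>.\<close>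

lemma step_bound_witness:
  fixes Hess :: "'a::topological_space \<Rightarrow> 'b::real_normed_vector"
  assumes K: "compact K" "K \<noteq> {}" and Hess_cont: "continuous_on K Hess"
    and dt: "0 < dt" "ereal dt < step_bound T (hess_bound Hess K)"
  obtains B where "0 < B" "\<forall>y\<in>K. norm (Hess y) \<le> B" "B * dt < ln 2" "ereal dt < T"
proof -
  define LK where "LK = hess_bound Hess K"
  have "compact ((\<lambda>y. norm (Hess y)) ` K)"
    using Hess_cont K(1) by (intro compact_continuous_image continuous_intros)
  then have "bdd_above ((\<lambda>y. norm (Hess y)) ` K)" by (intro bounded_imp_bdd_above compact_imp_bounded)
  then have LK_ub: "\<forall>y\<in>K. norm (Hess y) \<le> LK"
    unfolding LK_def hess_bound_def by (auto intro: cSUP_upper2)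
  then have LK0: "0 \<le> LK" using K(2) norm_ge_zero order_trans by blast
  have "ereal dt < (if LK = 0 then \<infinity> else ereal (ln 2 / LK))" "ereal dt < T"
    using dt unfolding step_bound_def LK_def by auto
  then have LK_dt: "LK < ln 2 / dt"
    using dt(1) LK0 by (cases "LK = 0") (auto simp: field_simps)
  define a where "a = ln 2 / dt"
  define B where "B = (LK + a) / 2"
  have "0 < a" using dt(1) unfolding a_def by simp
  then have "0 < B" "LK \<le> B" "B < a"
    using LK0 LK_dt unfolding B_def a_def[symmetric] by auto
  moreover have "B * dt < ln 2" using \<open>B < a\<close> dt(1) unfolding a_def by (simp add: field_simps)
  ultimately show ?thesis using that LK_ub \<open>ereal dt < T\<close> order_trans by blast
qed

theorem theorem4:
  fixes H :: "('n::finite) phase \<Rightarrow> real"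
    and gH :: "'n phase \<Rightarrow> 'n phase"
    and Hess :: "'n phase \<Rightarrow> ('n phase \<Rightarrow>\<^sub>L 'n phase)"
    and K :: "'n phase set"
    and T :: ereal
  assumes H_grad: "\<forall>x. has_gradient H (gH x) x"
    and gH_deriv: "\<forall>x. (gH has_derivative blinfun_apply (Hess x)) (at x)"
    and Hess_cont: "continuous_on UNIV Hess"
    and K_ne: "K \<noteq> {}" and K_compact: "compact K"
    and T_pos: "0 < T"
    and K_inv: "\<forall>x\<in>K. \<forall>t. 0 \<le> t \<and> ereal t \<le> T \<longrightarrow>
                  flow_exists (ham_vf gH) t x \<and> flow (ham_vf gH) t x \<in> K"
  shows "\<forall>dt. 0 < dt \<and> ereal dt < step_bound T (hess_bound Hess K) \<longrightarrow>
     (\<forall>x\<in>K. lower_block_invertible_at (flow (ham_vf gH) dt) x) \<and>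
     (\<forall>U. qP_chart (ham_vf gH) dt U \<and> U \<inter> K \<noteq> {} \<and>
          simply_connected (qP_map (flow (ham_vf gH) dt) ` U) \<longrightarrow>
        (let \<Phi> = flow (ham_vf gH) dt; \<psi> = qP_map \<Phi>; W = \<psi> ` U in
          (\<forall>x\<in>U. lower_block_invertible_at \<Phi> x) \<and>
          diffeo_on U W \<psi> \<and> open W \<and> simply_connected W \<and>
          (\<exists>S :: 'n phase \<Rightarrow> real.
             (\<forall>y\<in>W. has_gradient S (snd (inv_into U \<psi> y), fst (\<Phi> (inv_into U \<psi> y))) y) \<and>
             (\<forall>x\<in>U. has_gradient (\<lambda>y. (S y - fst y \<bullet> snd y) / dt)
                        (scaleR (1/dt) (JmatT (\<Phi> x - x))) (I1 x + I2 (\<Phi> x))))))"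
proof -
  interpret hamiltonian H gH Hess
    using H_grad gH_deriv Hess_cont by unfold_locales auto
  show ?thesis
  proof (intro allI impI conjI ballI, goal_cases)
    case (1 dt x)
    then obtain B where B: "0 < B" "\<forall>y\<in>K. norm (Hess y) \<le> B" "B * dt < ln 2" and dt_T: "ereal dt < T"
      using step_bound_witness[OF K_compact K_ne continuous_on_subset[OF Hess_cont subset_UNIV]] by blast
    have "ereal s \<le> T" if "s \<in> {0..dt}" for s
      using that dt_T by (metis atLeastAtMost_iff ereal_less_eq(3) less_imp_le order_trans)
    then show ?case
      using 1 K_inv by (intro lower_block_invertible_flow[OF _ _ B]) auto
  next
    case (2 dt U)
    then have chart: "qP_chart (ham_vf gH) dt U" by blast
    show ?case
      using 2 chart[unfolded qP_chart_def] qP_chart_lower_block_invertible[OF chart]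
        qP_chart_generating_function_exists[OF chart]
      unfolding Let_def by blast
  qed
qed

end
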